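(* Let $\mathcal{C}=\mathcal{I}_{\beta_1}\oplus\mathcal{I}_{\beta_2}\oplus\dots\oplus\mathcal{I}_{\beta_u}$ be a $\lambda$-constacyclic code of length $n$ over $\mathbb{F}_q$, where $0\le\beta_1<\dots<\beta_u\le s$. Then $$N_{\langle\rho\rangle}(\mathcal{C}^{*})=\sum_{\substack{\{\gamma_1,\dots,\gamma_l\}\subseteq\{1,\dots,u\}\\ l\ge1,\ \gamma_1<\dots<\gamma_l}}\frac{\prod_{i=1}^{l}(q^{d_{\beta_{\gamma_i}}}-1)\cdot\gcd(1+t\alpha_{\beta_{\gamma_1}},\dots,1+t\alpha_{\beta_{\gamma_l}},n)}{tn}.$$ Moreover, the number of distinct nonzero Hamming weights of codewords of $\mathcal{C}$ is at most $N_{\langle\rho\rangle}(\mathcal{C}^{*})$, with equality if and only if for any two nonzero codewords $c_1,c_2\in\mathcal{C}$ of the same Hamming weight there exists an integer $j$ with $\rho^{j}(c_1)=c_2$.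
   Context: Standing setup: $q$ is a prime power, $n$ a positive integer with $\gcd(n,q)=1$, $\lambda\in\mathbb{F}_q^{*}$ has multiplicative order $t$ (so $t\mid q-1$). $\mathcal{R}=\mathbb{F}_q[x]/\langle x^n-\lambda\rangle$; vectors $(c_0,\dots,c_{n-1})\in\mathbb{F}_q^n$ are identified with $c_0+c_1x+\dots+c_{n-1}x^{n-1}\in\mathcal{R}$, and a $\lambda$-constacyclic code of length $n$ is an ideal of $\mathcal{R}$. Let $\zeta$ be a primitive $tn$-th root of unity in an extension $\mathbb{F}_{q^m}$ with $\zeta^n=\lambda$, so $x^n-\lambda=\prod_{i=0}^{n-1}(x-\zeta^{1+ti})$. The set $\mathcal{S}=\{1+ti:0\le i\le n-1\}$ (residues mod $tn$) is partitioned into the distinct $q$-cyclotomic cosets modulo $tn$, $C_{1+t\alpha_j}=\{(1+t\alpha_j)q^{h}\bmod tn: h\ge 0\}$, $j=0,\dots,s$, with $0=\alpha_0<\alpha_1<\dots<\alpha_s\le n-1$ and $d_j=|C_{1+t\alpha_j}|$. Let $m_j(x)=\prod_{h\in C_{1+t\alpha_j}}(x-\zeta^{h})$ (irreducible over $\mathbb{F}_q$), and let $\mathcal{I}_j$ be the ideal of $\mathcal{R}$ generated by $(x^n-\lambda)/m_j(x)$; this is an irreducible $\lambda$-constacyclic code of dimension $d_j$, said to correspond to the coset $C_{1+t\alpha_j}$, and $\mathcal{R}=\mathcal{I}_0\oplus\dots\oplus\mathcal{I}_s$. The cyclic shift $\rho:\mathcal{R}\to\mathcal{R}$ is $\rho(c(x))=xc(x)$,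 i.e. $(c_0,\dots,c_{n-1})\mapsto(\lambda c_{n-1},c_0,\dots,c_{n-2})$; $\langle\rho\rangle$ is the cyclic group it generates, of order $tn$. $\mathcal{C}^{*}=\mathcal{C}\setminus\{0\}$, and for a group $G$ acting on a finite set $X$, $N_G(X)$ denotes the number of $G$-orbits on $X$. *)

theory Defs
  imports "HOL-Computational_Algebra.Polynomial" "HOL-Computational_Algebra.Primes" "HOL-Library.Cardinality"
begin

definition mult_ord :: "'a::field \<Rightarrow> nat" where
  "mult_ord x = (LEAST k. 0 < k \<and> x ^ k = 1)"

definition is_field_emb :: "('a::field \<Rightarrow> 'b::field) \<Rightarrow> bool" where
  "is_field_emb e \<longleftrightarrow> e 1 = 1 \<and> (\<forall>x y. e (x + y) = e x + e y) \<and> (\<forall>x y. e (x * y) = e x * e y)"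

definition prim_root :: "nat \<Rightarrow> 'b::field \<Rightarrow> bool" where
  "prim_root N z \<longleftrightarrow> z ^ N = 1 \<and> (\<forall>k. 0 < k \<and> k < N \<longrightarrow> z ^ k \<noteq> 1)"

definition cyc_coset :: "nat \<Rightarrow> nat \<Rightarrow> nat \<Rightarrow> nat set" where
  "cyc_coset q N a = {(a * q ^ h) mod N | h. True}"

(* indices alpha: 1+t*alpha is the representative of its coset with least alpha *)
definition coset_reps :: "nat \<Rightarrow> nat \<Rightarrow> nat \<Rightarrow> nat set" where
  "coset_reps q t n = {i. i < n \<and> (\<forall>i'<i. (1 + t * i') mod (t * n) \<notin> cyc_coset q (t * n) (1 + t * i))}"

definition alpha :: "nat \<Rightarrow> nat \<Rightarrow> nat \<Rightarrow> nat \<Rightarrow> nat" where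
  "alpha q t n j = sorted_list_of_set (coset_reps q t n) ! j"

(* s : cosets are indexed by 0..s *)
definition s_idx :: "nat \<Rightarrow> nat \<Rightarrow> nat \<Rightarrow> nat" where
  "s_idx q t n = card (coset_reps q t n) - 1"

definition dj :: "nat \<Rightarrow> nat \<Rightarrow> nat \<Rightarrow> nat \<Rightarrow> nat" where
  "dj q t n j = card (cyc_coset q (t * n) (1 + t * alpha q t n j))"

definition modpoly :: "nat \<Rightarrow> 'a::field \<Rightarrow> 'a poly" where
  "modpoly n lam = monom 1 n - [:lam:]"

definition mj_ext :: "nat \<Rightarrow> nat \<Rightarrow> nat \<Rightarrow> 'b::field \<Rightarrow> nat \<Rightarrow> 'b poly" where
  "mj_ext q t n z j = (\<Prod>h\<in>cyc_coset q (t * n) (1 + t * alpha q t n j). [:- (z ^ h), 1:])"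

definition mj :: "('a::field \<Rightarrow> 'b::field) \<Rightarrow> nat \<Rightarrow> nat \<Rightarrow> nat \<Rightarrow> 'b \<Rightarrow> nat \<Rightarrow> 'a poly" where
  "mj e q t n z j = (THE p. map_poly e p = mj_ext q t n z j)"

(* elements of R = F_q[x]/<x^n - lambda> are represented by their reduced
   representatives (polynomials of degree < n); the vector (c_0,...,c_{n-1})
   is the coefficient vector *)
definition Rring :: "nat \<Rightarrow> 'a::field \<Rightarrow> 'a poly set" where
  "Rring n lam = {c. c mod modpoly n lam = c}"

definition Ij :: "('a::field \<Rightarrow> 'b::field) \<Rightarrow> nat \<Rightarrow> nat \<Rightarrow> nat \<Rightarrow> 'a \<Rightarrow> 'b \<Rightarrow> nat \<Rightarrow> 'a poly set" where
  "Ij e q t n lam z j =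
     {(a * (modpoly n lam div mj e q t n z j)) mod modpoly n lam | a. True}"

(* C = I_{beta_1} + ... + I_{beta_u}, B = {beta_1,...,beta_u} *)
definition code :: "('a::field \<Rightarrow> 'b::field) \<Rightarrow> nat \<Rightarrow> nat \<Rightarrow> nat \<Rightarrow> 'a \<Rightarrow> 'b \<Rightarrow> nat set \<Rightarrow> 'a poly set" where
  "code e q t n lam z B =
     {(\<Sum>j\<in>B. c j) | c. \<forall>j\<in>B. c j \<in> Ij e q t n lam z j}"

definition rho :: "nat \<Rightarrow> 'a::field \<Rightarrow> 'a poly \<Rightarrow> 'a poly" where
  "rho n lam c = (monom 1 1 * c) mod modpoly n lam"

definition rho_orbit :: "nat \<Rightarrow> 'a::field \<Rightarrow> 'a poly \<Rightarrow> 'a poly set" where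
  "rho_orbit n lam c = {(rho n lam ^^ k) c | k. True}"

definition num_orbits :: "nat \<Rightarrow> 'a::field \<Rightarrow> 'a poly set \<Rightarrow> nat" where
  "num_orbits n lam X = card (rho_orbit n lam ` X)"

definition hweight :: "'a::zero poly \<Rightarrow> nat" where
  "hweight c = card {i. coeff c i \<noteq> 0}"

end

theory Submission
  imports Defs "HOL-Number_Theory.Cong" "HOL-Library.FuncSet"
begin

text \<open>
  Evaluation at the roots \<zeta>^h of x^n - \<lambda> is injective on F_q[x]/(x^n - \<lambda>), and on these
  evaluations \<rho> acts as multiplication by \<zeta>^h. A nonzero element of I_j evaluates to zero
  outside the cyclotomic coset of a_j = 1 + t \<alpha>_j, so \<rho>^k fixes it iff tn divides a_j k.
  Hence \<rho>^k fixes a codeword whose nonzero components are those indexed by \<Gamma> iff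
  tn / gcd(a_j (j \<in> \<Gamma>), n) divides k (the gcd may be taken with n instead of tn because
  every a_j is prime to t). So all orbits of the \<Prod>(q^d_j - 1) such codewords have that
  length, which gives the count. Since \<rho> permutes the coordinates up to the nonzero factor
  \<lambda>, it preserves Hamming weight, so the weight of a codeword only depends on its orbit.
\<close>

section \<open>Field embeddings\<close>

lemma field_emb_0: assumes "is_field_emb e" shows "e 0 = 0"
proof -
  have "e 0 + e 0 = e 0 + 0"
    using assms unfolding is_field_emb_def by (metis add_0_right)
  thus ?thesis by (rule add_left_imp_eq)
qed

lemma field_emb_1: "is_field_emb e \<Longrightarrow> e 1 = 1"
  and field_emb_add: "is_field_emb e \<Longrightarrow> e (x + y) = e x + e y"
  and field_emb_mult: "is_field_emb e \<Longrightarrow> e (x * y) = e x * e y"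
  unfolding is_field_emb_def by auto

lemma field_emb_uminus: assumes "is_field_emb e" shows "e (- x) = - e x"
  using field_emb_add[OF assms, of "- x" x] field_emb_0[OF assms]
  by (simp add: eq_neg_iff_add_eq_0)

lemma field_emb_diff: "is_field_emb e \<Longrightarrow> e (x - y) = e x - e y"
  using field_emb_add[of e x "- y"] field_emb_uminus[of e y] by simp

lemma field_emb_power: "is_field_emb e \<Longrightarrow> e (x ^ k) = e x ^ k"
  by (induction k) (auto simp: field_emb_1 field_emb_mult)

lemma field_emb_of_nat: "is_field_emb e \<Longrightarrow> e (of_nat k) = of_nat k"
  by (induction k) (auto simp: field_emb_0 field_emb_1 field_emb_add)

lemma field_emb_sum: "is_field_emb e \<Longrightarrow> e (sum f A) = (\<Sum>x\<in>A. e (f x))"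
  by (induction A rule: infinite_finite_induct) (auto simp: field_emb_0 field_emb_add)

lemma field_emb_eq_0_iff:
  fixes e :: "'a::field \<Rightarrow> 'b::field"
  assumes "is_field_emb e" shows "e x = 0 \<longleftrightarrow> x = 0"
proof
  assume "e x = 0"
  show "x = 0"
  proof (rule ccontr)
    assume "x \<noteq> 0"
    hence "e x * e (inverse x) = 1"
      using field_emb_mult[OF assms, of x "inverse x"] field_emb_1[OF assms] by simp
    with \<open>e x = 0\<close> show False by simp
  qed
qed (simp add: field_emb_0[OF assms])

lemma inj_field_emb:
  fixes e :: "'a::field \<Rightarrow> 'b::field"
  assumes "is_field_emb e" shows "inj e"
  by (rule injI) (metis assms field_emb_diff field_emb_eq_0_iff right_minus_eq)

lemma map_poly_emb_add: "is_field_emb e \<Longrightarrow> map_poly e (p + q) = map_poly e p + map_poly e q"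
  by (rule poly_eqI) (simp add: coeff_map_poly field_emb_0 field_emb_add)

lemma map_poly_emb_diff: "is_field_emb e \<Longrightarrow> map_poly e (p - q) = map_poly e p - map_poly e q"
  by (rule poly_eqI) (simp add: coeff_map_poly field_emb_0 field_emb_diff)

lemma map_poly_emb_mult: "is_field_emb e \<Longrightarrow> map_poly e (p * q) = map_poly e p * map_poly e q"
  by (rule poly_eqI)
     (simp add: coeff_map_poly field_emb_0 coeff_mult field_emb_sum field_emb_mult)

lemma map_poly_emb_sum:
  "is_field_emb e \<Longrightarrow> map_poly e (sum f A) = (\<Sum>x\<in>A. map_poly e (f x))"
  by (induction A rule: infinite_finite_induct) (auto simp: map_poly_emb_add)

lemma map_poly_emb_prod:
  "is_field_emb e \<Longrightarrow> map_poly e (prod f A) = (\<Prod>x\<in>A. map_poly e (f x))"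
  by (induction A rule: infinite_finite_induct) (auto simp: map_poly_emb_mult field_emb_1)

lemma inj_map_poly_emb:
  fixes e :: "'a::field \<Rightarrow> 'b::field"
  assumes "is_field_emb e" shows "inj (map_poly e)"
proof (rule injI)
  fix p q :: "'a poly" assume "map_poly e p = map_poly e q"
  hence "e (coeff p i) = e (coeff q i)" for i
    by (metis assms coeff_map_poly field_emb_0)
  thus "p = q" using inj_field_emb[OF assms] by (simp add: injD poly_eqI)
qed

lemma map_poly_emb_eq_0_iff:
  fixes e :: "'a::field \<Rightarrow> 'b::field"
  shows "is_field_emb e \<Longrightarrow> map_poly e p = 0 \<longleftrightarrow> p = 0"
  by (simp add: field_emb_eq_0_iff map_poly_eq_0_iff)

lemma degree_map_poly_emb:
  fixes e :: "'a::field \<Rightarrow> 'b::field"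
  shows "is_field_emb e \<Longrightarrow> degree (map_poly e p) = degree p"
  by (simp add: degree_map_poly field_emb_eq_0_iff)

section \<open>Finite fields and the Frobenius map\<close>

lemma card_field_ge_2: "CARD('a::{finite,field}) \<ge> 2"
proof -
  have "card {0::'a, 1} \<le> CARD('a)" by (rule card_mono) auto
  thus ?thesis by simp
qed

lemma field_power_card_minus_1:
  fixes a :: "'a::{finite,field}"
  assumes "a \<noteq> 0"
  shows "a ^ (CARD('a) - 1) = 1"
proof -
  let ?U = "UNIV - {0::'a}"
  have "bij_betw ((*) a) ?U ?U"
    by (rule bij_betw_byWitness[where f' = "\<lambda>x. inverse a * x"]) (use assms in auto)
  hence "prod id ?U = (\<Prod>x\<in>?U. a * x)"
    using prod.reindex_bij_betw[of "(*) a" ?U ?U id] by simp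
  also have "\<dots> = a ^ card ?U * prod id ?U"
    by (simp add: prod.distrib)
  finally have "a ^ card ?U = 1" by simp
  thus ?thesis by (simp add: card_Diff_singleton)
qed

lemma field_power_card:
  fixes a :: "'a::{finite,field}"
  shows "a ^ CARD('a) = a"
proof (cases "a = 0")
  case False
  have "CARD('a) = Suc (CARD('a) - 1)" using card_field_ge_2[where 'a='a] by simp
  thus ?thesis using field_power_card_minus_1[OF False] by (metis power_Suc2 mult_1)
qed (use card_field_ge_2[where 'a='a] in simp)

text \<open>
  This avoids knowing that CARD('a) is a power of the characteristic: the polynomial
  \<Sum>0<i<q. (q choose i) x^i has degree < q but vanishes on the whole field, as (a + 1)^q = a^q + 1.
\<close>
lemma binomial_card_eq_0:
  assumes "0 < k" "k < CARD('a::{finite,field})"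
  shows "(of_nat (CARD('a) choose k) :: 'a) = 0"
proof -
  define q where "q = CARD('a)"
  define P :: "'a poly" where "P = (\<Sum>i\<in>{1..<q}. monom (of_nat (q choose i)) i)"
  have q_split: "{..q} = insert 0 (insert q {1..<q})"
    using card_field_ge_2[where 'a='a] unfolding q_def by auto
  have "\<And>a. poly P a = 0"
  proof -
    fix a :: 'a
    have "(a + 1) ^ q = (\<Sum>i\<le>q. of_nat (q choose i) * a ^ i)"
      by (simp add: binomial_ring)
    moreover have "(a + 1) ^ q = a ^ q + 1"
      unfolding q_def by (simp add: field_power_card)
    ultimately show "poly P a = 0"
      using card_field_ge_2[where 'a='a] q_split
      by (simp add: P_def poly_sum poly_monom q_def algebra_simps)
  qed
  have "P = 0"
  proof (rule ccontr)
    assume "P \<noteq> 0"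
    hence "card {x. poly P x = 0} \<le> degree P" by (rule card_poly_roots_bound)
    moreover have "degree P \<le> q - 1" unfolding P_def
      by (rule degree_sum_le) (auto intro: order.trans[OF degree_monom_le])
    ultimately show False
      using \<open>\<And>a. poly P a = 0\<close> card_field_ge_2[where 'a='a] unfolding q_def by simp
  qed
  moreover have "coeff P k = of_nat (q choose k)"
    unfolding P_def using assms by (simp add: coeff_sum coeff_monom q_def)
  ultimately show ?thesis unfolding q_def by simp
qed

lemma frobenius_add:
  fixes e :: "'a::{finite,field} \<Rightarrow> 'b::field"
  assumes "is_field_emb e"
  shows "((x::'b) + y) ^ CARD('a) = x ^ CARD('a) + y ^ CARD('a)"
proof -
  define q where "q = CARD('a)"
  have binom_0: "(of_nat (q choose k) :: 'b) = 0" if "0 < k" "k < q" for k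
    using binomial_card_eq_0[where 'a='a, of k] field_emb_of_nat[OF assms, of "q choose k"]
      field_emb_0[OF assms] that
    unfolding q_def by simp
  have "(x + y) ^ q = (\<Sum>k\<le>q. of_nat (q choose k) * x ^ k * y ^ (q - k))"
    by (rule binomial_ring)
  also have "{..q} = insert 0 (insert q {1..<q})"
    using card_field_ge_2[where 'a='a] unfolding q_def by auto
  also have "(\<Sum>k\<in>insert 0 (insert q {1..<q}). of_nat (q choose k) * x ^ k * y ^ (q - k))
      = y ^ q + x ^ q"
    using card_field_ge_2[where 'a='a] binom_0 unfolding q_def by simp
  finally show ?thesis unfolding q_def by simp
qed

lemma is_field_emb_frobenius:
  fixes e :: "'a::{finite,field} \<Rightarrow> 'b::field"
  assumes "is_field_emb e"
  shows "is_field_emb (\<lambda>x::'b. x ^ CARD('a))"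
  unfolding is_field_emb_def using frobenius_add[OF assms] by (simp add: power_mult_distrib)

lemma frobenius_fixed_in_range:
  fixes e :: "'a::{finite,field} \<Rightarrow> 'b::field"
  assumes "is_field_emb e" and "x ^ CARD('a) = x"
  shows "x \<in> range e"
proof -
  define q where "q = CARD('a)"
  define P :: "'b poly" where "P = monom 1 q - [:0, 1:]"
  have q2: "q \<ge> 2" unfolding q_def by (rule card_field_ge_2)
  have coeff_P: "coeff P q = 1" using q2 by (simp add: P_def coeff_pCons split: nat.split)
  hence "P \<noteq> 0" by auto
  have "degree P \<le> q" unfolding P_def using q2
    by (intro degree_diff_le) (auto simp: degree_monom_eq)
  have roots: "{z. poly P z = 0} = {z. z ^ q = z}" by (auto simp: P_def poly_monom)
  have "e a ^ q = e a" for a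
    using field_emb_power[OF assms(1), of a q] field_power_card[of a] unfolding q_def by simp
  hence "range e \<subseteq> {z. z ^ q = z}" by auto
  moreover have "card (range e) = q"
    unfolding q_def using card_image[OF inj_field_emb[OF assms(1)]] by simp
  moreover have "finite {z::'b. z ^ q = z}"
    using poly_roots_finite[OF \<open>P \<noteq> 0\<close>] unfolding roots .
  moreover have "card {z::'b. z ^ q = z} \<le> q"
    using card_poly_roots_bound[OF \<open>P \<noteq> 0\<close>] \<open>degree P \<le> q\<close> unfolding roots by simp
  ultimately have "range e = {z. z ^ q = z}"
    by (intro card_subset_eq) (auto intro: antisym card_mono)
  thus ?thesis using assms(2) unfolding q_def by auto
qed

section \<open>Orbits of an iterated map\<close>

definition funpow_orbit :: "('a \<Rightarrow> 'a) \<Rightarrow> 'a \<Rightarrow> 'a set" where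
  "funpow_orbit f c = range (\<lambda>k. (f ^^ k) c)"

lemma funpow_in_funpow_orbit: "(f ^^ k) c \<in> funpow_orbit f c"
  unfolding funpow_orbit_def by simp

lemma self_in_funpow_orbit: "c \<in> funpow_orbit f c"
  using funpow_in_funpow_orbit[where k=0] by simp

lemma funpow_orbit_funpow:
  assumes "0 < L" "(f ^^ L) c = c"
  shows "funpow_orbit f ((f ^^ k) c) = funpow_orbit f c"
proof
  show "funpow_orbit f ((f ^^ k) c) \<subseteq> funpow_orbit f c"
    unfolding funpow_orbit_def by (auto simp flip: funpow_add[THEN fun_cong, unfolded comp_def])
  have "(f ^^ i) c = (f ^^ (i + (L - 1) * k)) ((f ^^ k) c)" for i
  proof -
    have "i + (L - 1) * k + k = i + L * k" using assms(1) by (cases L) auto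
    hence "(f ^^ (i + (L - 1) * k)) ((f ^^ k) c) = (f ^^ (i + L * k)) c"
      by (metis comp_apply funpow_add)
    also have "\<dots> = (f ^^ i) c"
      by (metis assms(2) funpow_mod_eq mod_mult_self2)
    finally show ?thesis by simp
  qed
  thus "funpow_orbit f c \<subseteq> funpow_orbit f ((f ^^ k) c)"
    unfolding funpow_orbit_def by (metis image_subsetI rangeI)
qed

lemma funpow_eq_iff_mod_eq:
  assumes L: "0 < L" and period: "\<And>k. (f ^^ k) c = c \<longleftrightarrow> L dvd k"
  shows "(f ^^ a) c = (f ^^ b) c \<longleftrightarrow> a mod L = b mod L"
proof -
  have periodic: "(f ^^ L) c = c" using period by simp
  have "a = b" if "a \<le> b" "b < L" "(f ^^ a) c = (f ^^ b) c" for a b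
  proof -
    have "(f ^^ (L - b + a)) c = (f ^^ (L - b)) ((f ^^ a) c)"
      by (simp add: funpow_add)
    also have "\<dots> = (f ^^ (L - b + b)) c"
      using that(3) by (simp add: funpow_add)
    also have "\<dots> = c" using that(2) periodic by simp
    finally have "L dvd L - b + a" using period by simp
    moreover have "0 < L - b + a" using that(2) by simp
    ultimately have "L \<le> L - b + a" by (rule dvd_imp_le)
    thus "a = b" using that(1,2) by linarith
  qed
  hence "(f ^^ (a mod L)) c = (f ^^ (b mod L)) c \<longleftrightarrow> a mod L = b mod L"
    using L by (metis linorder_le_cases mod_less_divisor)
  thus ?thesis by (simp add: funpow_mod_eq[OF periodic])
qed

lemma card_funpow_orbit:
  assumes L: "0 < L" and period: "\<And>k. (f ^^ k) c = c \<longleftrightarrow> L dvd k"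
  shows "card (funpow_orbit f c) = L"
proof -
  have "funpow_orbit f c = (\<lambda>k. (f ^^ k) c) ` {..<L}"
  proof (intro equalityI subsetI)
    fix x assume "x \<in> funpow_orbit f c"
    then obtain k where "x = (f ^^ k) c" unfolding funpow_orbit_def by blast
    hence "x = (f ^^ (k mod L)) c"
      using period funpow_mod_eq[where n=L and f=f and x=c] by simp
    thus "x \<in> (\<lambda>k. (f ^^ k) c) ` {..<L}" using L by simp
  qed (auto simp: funpow_orbit_def)
  moreover have "inj_on (\<lambda>k. (f ^^ k) c) {..<L}"
    by (rule inj_onI) (simp add: funpow_eq_iff_mod_eq[OF assms])
  ultimately show ?thesis by (simp add: card_image)
qed

lemma funpow_orbit_eq_if_meet:
  assumes "0 < L" "(f ^^ L) a = a" "0 < L'" "(f ^^ L') b = b"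
    and "funpow_orbit f a \<inter> funpow_orbit f b \<noteq> {}"
  shows "funpow_orbit f a = funpow_orbit f b"
proof -
  obtain i j where "(f ^^ i) a = (f ^^ j) b"
    using assms(5) unfolding funpow_orbit_def by auto
  thus ?thesis
    using funpow_orbit_funpow[OF assms(1,2), of i] funpow_orbit_funpow[OF assms(3,4), of j] by simp
qed

lemma card_eq_period_mult_card_funpow_orbits:
  assumes fin: "finite X" and L: "0 < L"
    and closed: "\<And>c k. c \<in> X \<Longrightarrow> (f ^^ k) c \<in> X"
    and period: "\<And>c k. c \<in> X \<Longrightarrow> (f ^^ k) c = c \<longleftrightarrow> L dvd k"
  shows "card X = L * card (funpow_orbit f ` X)"
proof -
  have union: "\<Union> (funpow_orbit f ` X) = X"
  proof
    show "\<Union> (funpow_orbit f ` X) \<subseteq> X"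
      using closed unfolding funpow_orbit_def by auto
    show "X \<subseteq> \<Union> (funpow_orbit f ` X)"
      using self_in_funpow_orbit by fast
  qed
  have "L * card (funpow_orbit f ` X) = card (\<Union> (funpow_orbit f ` X))"
  proof (rule card_partition)
    show "card A = L" if "A \<in> funpow_orbit f ` X" for A
      using card_funpow_orbit[OF L period] that by blast
    show "A \<inter> B = {}"
      if AB: "A \<in> funpow_orbit f ` X" "B \<in> funpow_orbit f ` X" "A \<noteq> B" for A B
    proof -
      obtain a b where "a \<in> X" "b \<in> X" "A = funpow_orbit f a" "B = funpow_orbit f b"
        using AB(1,2) by blast
      thus ?thesis
        using funpow_orbit_eq_if_meet[OF L _ L, where a=a and b=b and f=f] period AB(3) by auto
    qed
  qed (use fin union in simp_all)
  thus ?thesis using union by simp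
qed

lemma card_invariant_image_funpow_orbits:
  assumes fin: "finite X"
    and closed: "\<And>c k. c \<in> X \<Longrightarrow> (f ^^ k) c \<in> X"
    and periodic: "\<And>c. c \<in> X \<Longrightarrow> \<exists>L>0. (f ^^ L) c = c"
    and invariant: "\<And>c k. c \<in> X \<Longrightarrow> W ((f ^^ k) c) = W c"
  shows "card (W ` X) \<le> card (funpow_orbit f ` X) \<and>
         (card (W ` X) = card (funpow_orbit f ` X) \<longleftrightarrow>
           (\<forall>c1\<in>X. \<forall>c2\<in>X. W c1 = W c2 \<longrightarrow> (\<exists>k. (f ^^ k) c1 = c2)))"
proof -
  define w where "w A = the_elem (W ` A)" for A
  have w_orbit: "w (funpow_orbit f c) = W c" if "c \<in> X" for c
  proof -
    have "W ` funpow_orbit f c = {W c}"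
      using invariant[OF that] self_in_funpow_orbit[of c f] unfolding funpow_orbit_def by auto
    thus ?thesis unfolding w_def by simp
  qed
  have image_eq: "W ` X = w ` (funpow_orbit f ` X)"
    using w_orbit by (force simp: image_image)
  have same_orbit: "funpow_orbit f c1 = funpow_orbit f c2 \<longleftrightarrow> (\<exists>k. (f ^^ k) c1 = c2)"
    if "c1 \<in> X" "c2 \<in> X" for c1 c2
  proof
    assume "funpow_orbit f c1 = funpow_orbit f c2"
    hence "c2 \<in> funpow_orbit f c1" using self_in_funpow_orbit[of c2 f] by simp
    thus "\<exists>k. (f ^^ k) c1 = c2" unfolding funpow_orbit_def by auto
  next
    assume "\<exists>k. (f ^^ k) c1 = c2"
    thus "funpow_orbit f c1 = funpow_orbit f c2"
      using periodic[OF that(1)] funpow_orbit_funpow by metis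
  qed
  have "card (W ` X) = card (funpow_orbit f ` X) \<longleftrightarrow> inj_on w (funpow_orbit f ` X)"
    unfolding image_eq using inj_on_iff_eq_card[of "funpow_orbit f ` X" w] fin by simp
  also have "\<dots> \<longleftrightarrow> (\<forall>c1\<in>X. \<forall>c2\<in>X. W c1 = W c2 \<longrightarrow> (\<exists>k. (f ^^ k) c1 = c2))"
    unfolding inj_on_def using w_orbit same_orbit by auto
  finally show ?thesis using card_image_le[of "funpow_orbit f ` X" w] fin
    unfolding image_eq by simp
qed

lemma rho_orbit_eq_funpow_orbit: "rho_orbit n lam = funpow_orbit (rho n lam)"
  unfolding rho_orbit_def funpow_orbit_def by auto

lemma dvd_mult_all_iff_dvd_Gcd_mult:
  fixes A :: "nat set"
  assumes "A \<noteq> {}" and "\<forall>a\<in>A. coprime a t"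
  shows "(\<forall>a\<in>A. t * n dvd a * k) \<longleftrightarrow> t * n dvd Gcd (A \<union> {n}) * k"
proof -
  obtain a0 where "a0 \<in> A" using assms(1) by blast
  hence "coprime (Gcd A) t"
    using assms(2) by (meson Gcd_dvd coprime_imp_coprime dvd_refl coprime_divisors)
  hence gcd_eq: "gcd (Gcd A) (t * n) = gcd (Gcd A) n"
    by (rule gcd_mult_right_left_cancel)
  have "(\<forall>a\<in>A. t * n dvd a * k) \<longleftrightarrow> t * n dvd Gcd ((\<lambda>a. a * k) ` A)"
    by (simp add: dvd_Gcd_iff)
  also have "Gcd ((\<lambda>a. a * k) ` A) = Gcd A * k"
    using Gcd_mult[of k A] by (simp add: mult.commute)
  also have "t * n dvd Gcd A * k \<longleftrightarrow> t * n dvd gcd (Gcd A * k) (t * n * k)"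
    by simp
  also have "gcd (Gcd A * k) (t * n * k) = gcd n (Gcd A) * k"
    using gcd_eq gcd_mult_distrib_nat[of k "Gcd A" "t * n"]
    by (simp add: gcd.commute mult.commute)
  finally show ?thesis by (simp add: Gcd_insert)
qed

lemma prod_linear_factors_dvd:
  fixes p :: "'b::field poly"
  assumes "finite A" "inj_on f A" "\<forall>x\<in>A. poly p (f x) = 0"
  shows "(\<Prod>x\<in>A. [:- f x, 1:]) dvd p"
  using assms
proof (induction A arbitrary: p rule: finite_induct)
  case (insert x A)
  have "[:- f x, 1:] dvd p" using insert.prems by (simp add: dvd_iff_poly_eq_0)
  then obtain p' where p': "p = [:- f x, 1:] * p'" by (elim dvdE)
  have "\<forall>y\<in>A. poly p' (f y) = 0"
    using insert.prems insert.hyps(2) p' by (auto simp: inj_on_def)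
  hence "(\<Prod>x\<in>A. [:- f x, 1:]) dvd p'" using insert.IH insert.prems(1) by (auto simp: inj_on_def)
  thus ?case unfolding prod.insert[OF insert.hyps] p' by (rule mult_dvd_mono[OF dvd_refl])
qed simp

lemma card_degree_less:
  assumes "0 < d"
  shows "card {p :: 'a::{finite,zero} poly. degree p < d} = CARD('a) ^ d"
proof -
  let ?coeffs = "\<lambda>p. map (coeff p) [0..<d]"
  let ?L = "{xs. set xs \<subseteq> (UNIV :: 'a set) \<and> length xs = d}"
  have "bij_betw ?coeffs {p. degree p < d} ?L"
  proof (rule bij_betw_byWitness[where f' = Poly])
    show "\<forall>p\<in>{p. degree p < d}. Poly (?coeffs p) = p"
      by (auto intro!: poly_eqI simp: nth_default_def coeff_eq_0)
    show "\<forall>xs\<in>?L. ?coeffs (Poly xs) = xs"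
      by (auto intro!: nth_equalityI simp: nth_default_def)
    show "Poly ` ?L \<subseteq> {p. degree p < d}"
    proof
      fix p assume "p \<in> Poly ` ?L"
      then obtain xs :: "'a list" where "length xs = d" "p = Poly xs" by auto
      hence "degree p \<le> d - 1" by (intro degree_le) (auto simp: nth_default_def)
      thus "p \<in> {p. degree p < d}" using assms by simp
    qed
  qed auto
  thus ?thesis using card_lists_length_eq[of "UNIV :: 'a set" d] bij_betw_same_card by fastforce
qed

section \<open>The constacyclic setting\<close>

locale constacyclic =
  fixes lam :: "'a::{finite,field}" and e :: "'a \<Rightarrow> 'b::{finite,field}" and z :: 'b
    and q n t :: nat
  assumes q_card: "q = CARD('a)" and n_pos: "0 < n" and coprime_n_q: "coprime n q"
    and lam_nonzero: "lam \<noteq> 0" and t_ord: "t = mult_ord lam" and emb: "is_field_emb e"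
    and z_prim: "prim_root (t * n) z" and z_power_n: "z ^ n = e lam"
begin

lemma q_ge_2: "q \<ge> 2"
  using card_field_ge_2[where 'a='a] q_card by simp

lemma t_pos: "0 < t" and lam_power_t: "lam ^ t = 1"
proof -
  have "lam ^ (q - 1) = 1"
    unfolding q_card by (rule field_power_card_minus_1[OF lam_nonzero])
  hence "0 < q - 1 \<and> lam ^ (q - 1) = 1" using q_ge_2 by simp
  hence "0 < t \<and> lam ^ t = 1"
    unfolding t_ord mult_ord_def by (rule LeastI)
  thus "0 < t" "lam ^ t = 1" by simp_all
qed

lemma t_dvd_q_minus_1: "t dvd q - 1"
proof -
  define k where "k = q - 1"
  have "lam ^ k = lam ^ (t * (k div t) + k mod t)" by simp
  also have "\<dots> = (lam ^ t) ^ (k div t) * lam ^ (k mod t)"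
    by (simp only: power_add power_mult)
  finally have "lam ^ k = lam ^ (k mod t)" using lam_power_t by simp
  moreover have "lam ^ k = 1"
    unfolding k_def q_card by (rule field_power_card_minus_1[OF lam_nonzero])
  ultimately have "lam ^ (k mod t) = 1" by simp
  have "k mod t = 0"
  proof (rule ccontr)
    assume "k mod t \<noteq> 0"
    hence "t \<le> k mod t"
      using \<open>lam ^ (k mod t) = 1\<close> unfolding t_ord mult_ord_def by (simp add: Least_le)
    thus False using mod_less_divisor[OF t_pos, of k] by linarith
  qed
  thus ?thesis unfolding k_def by (simp add: dvd_eq_mod_eq_0)
qed

lemma tn_pos: "0 < t * n" using t_pos n_pos by simp

lemma q_cong_1: "[q = 1] (mod t)"
proof -
  have "[q - 1 + 1 = 0 + 1] (mod t)"
    using t_dvd_q_minus_1 by (intro cong_add) (simp_all add: cong_0_iff)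
  thus ?thesis using q_ge_2 by simp
qed

lemma coprime_q_tn: "coprime q (t * n)"
proof -
  have "coprime q t"
    using q_cong_1 cong_imp_coprime[of 1 q t] by (simp add: cong_sym_eq)
  thus ?thesis using coprime_n_q by (simp add: coprime_commute)
qed

lemma z_power_tn: "z ^ (t * n) = 1" using z_prim unfolding prim_root_def by simp

lemma z_power_mod: "z ^ k = z ^ (k mod (t * n))"
proof -
  have "z ^ k = z ^ (t * n * (k div (t * n)) + k mod (t * n))" by simp
  also have "\<dots> = (z ^ (t * n)) ^ (k div (t * n)) * z ^ (k mod (t * n))"
    by (simp only: power_add power_mult)
  finally show ?thesis using z_power_tn by simp
qed

lemma z_power_eq_1_iff: "z ^ k = 1 \<longleftrightarrow> t * n dvd k"
proof
  assume "z ^ k = 1"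
  hence "z ^ (k mod (t * n)) = 1" using z_power_mod[of k] by simp
  moreover have "k mod (t * n) < t * n" using tn_pos by simp
  ultimately have "k mod (t * n) = 0"
    using z_prim unfolding prim_root_def by (metis neq0_conv)
  thus "t * n dvd k" by (simp add: dvd_eq_mod_eq_0)
next
  assume "t * n dvd k"
  hence "k mod (t * n) = 0" by (simp add: dvd_eq_mod_eq_0)
  thus "z ^ k = 1" using z_power_mod[of k] by simp
qed

lemma z_nonzero: "z \<noteq> 0"
  using z_power_tn tn_pos by (cases "t * n") auto

lemma z_power_inj: assumes "a < t * n" "b < t * n" "z ^ a = z ^ b" shows "a = b"
proof -
  have *: "x = y" if "x \<le> y" "y < t * n" "z ^ x = z ^ y" for x y
  proof -
    have "z ^ y = z ^ x * z ^ (y - x)" using that(1) by (simp add: power_add[symmetric])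
    hence "t * n dvd y - x" using that(3) z_nonzero z_power_eq_1_iff by simp
    moreover have "y - x < t * n" using that(2) by simp
    ultimately have "y - x = 0" by (cases "y - x = 0") (auto dest: nat_dvd_not_less)
    thus ?thesis using that(1) by simp
  qed
  show ?thesis using *[of a b] *[of b a] assms by (cases "a \<le> b") auto
qed

lemma q_power_period: "\<exists>r>0. [q ^ r = 1] (mod (t * n))"
proof -
  have "\<not> inj (\<lambda>i. q ^ i mod (t * n))"
  proof
    assume "inj (\<lambda>i. q ^ i mod (t * n))"
    hence "infinite (range (\<lambda>i. q ^ i mod (t * n)))"
      by (simp add: finite_image_iff)
    moreover have "range (\<lambda>i. q ^ i mod (t * n)) \<subseteq> {..<t * n}" using tn_pos by auto
    ultimately show False using finite_subset by blast
  qed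
  then obtain i j where ij: "i \<noteq> j" "q ^ i mod (t * n) = q ^ j mod (t * n)"
    unfolding inj_def by auto
  have main: "\<exists>r>0. [q ^ r = 1] (mod (t * n))"
    if "i < j" "q ^ i mod (t * n) = q ^ j mod (t * n)" for i j
  proof -
    have "[q ^ i * q ^ (j - i) = q ^ i * 1] (mod (t * n))"
      using that by (simp add: cong_def power_add[symmetric])
    hence "[q ^ (j - i) = 1] (mod (t * n))"
      by (subst (asm) cong_mult_lcancel_nat) (use coprime_q_tn in auto)
    thus ?thesis using that by (intro exI[of _ "j - i"]) auto
  qed
  show ?thesis using ij main[of i j] main[of j i] by (cases "i < j") auto
qed

abbreviation coset :: "nat \<Rightarrow> nat set" where "coset a \<equiv> cyc_coset q (t * n) a"

lemma finite_coset: "finite (coset a)" and coset_subset: "coset a \<subseteq> {..<t * n}"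
proof -
  show "coset a \<subseteq> {..<t * n}" unfolding cyc_coset_def using tn_pos by auto
  thus "finite (coset a)" using finite_subset by blast
qed

lemma mod_in_coset: "a mod (t * n) \<in> coset a"
  unfolding cyc_coset_def by (auto intro: exI[of _ 0])

lemma coset_dvd_mult_iff:
  assumes "h \<in> coset a" shows "t * n dvd h * k \<longleftrightarrow> t * n dvd a * k"
proof -
  obtain i where h: "h = (a * q ^ i) mod (t * n)" using assms unfolding cyc_coset_def by auto
  have "(t * n) dvd h * k \<longleftrightarrow> (t * n) dvd (a * q ^ i) * k"
    unfolding h by (simp add: dvd_eq_mod_eq_0 mod_mult_left_eq)
  also have "\<dots> \<longleftrightarrow> (t * n) dvd (a * k) * q ^ i" by (simp add: ac_simps)
  also have "\<dots> \<longleftrightarrow> (t * n) dvd a * k"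
    by (rule coprime_dvd_mult_left_iff) (use coprime_q_tn in \<open>simp add: coprime_commute\<close>)
  finally show ?thesis .
qed

lemma coset_meet: assumes "x \<in> coset a" "x \<in> coset b" shows "a mod (t * n) \<in> coset b"
proof -
  obtain u where u: "x = (a * q ^ u) mod (t * n)"
    using assms(1) unfolding cyc_coset_def by auto
  obtain v where v: "x = (b * q ^ v) mod (t * n)"
    using assms(2) unfolding cyc_coset_def by auto
  obtain r where r: "r > 0" "[q ^ r = 1] (mod (t * n))" using q_power_period by blast
  have "[a * q ^ u = b * q ^ v] (mod (t * n))" using u v by (simp add: cong_def)
  hence c2: "[a * q ^ u * q ^ (u * (r - 1)) = b * q ^ v * q ^ (u * (r - 1))] (mod (t * n))"
    by (rule cong_mult) simp
  have eq: "a * q ^ u * q ^ (u * (r - 1)) = a * (q ^ r) ^ u"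
    using r(1) by (simp add: power_add[symmetric] power_mult[symmetric] algebra_simps)
  have "[a * (q ^ r) ^ u = a * 1 ^ u] (mod (t * n))"
    by (intro cong_mult cong_pow r(2)) simp
  hence "[a = a * (q ^ r) ^ u] (mod (t * n))" by (simp add: cong_sym_eq)
  hence "[a = a * q ^ u * q ^ (u * (r - 1))] (mod (t * n))" by (simp only: eq)
  hence "[a = b * q ^ v * q ^ (u * (r - 1))] (mod (t * n))" using c2 by (rule cong_trans)
  hence "[a = b * q ^ (v + u * (r - 1))] (mod (t * n))" by (simp add: power_add mult.assoc)
  thus ?thesis unfolding cyc_coset_def by (auto simp: cong_def)
qed

lemma bij_betw_times_q_coset: "bij_betw (\<lambda>h. (h * q) mod (t * n)) (coset a) (coset a)"
proof -
  let ?f = "\<lambda>h. (h * q) mod (t * n)"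
  have img: "?f ` coset a \<subseteq> coset a"
  proof
    fix x assume "x \<in> ?f ` coset a"
    then obtain h where h: "h \<in> coset a" "x = ?f h" by auto
    then obtain i where i: "h = (a * q ^ i) mod (t * n)" unfolding cyc_coset_def by auto
    have "x = ((a * q ^ i) mod (t * n) * q) mod (t * n)" using h(2) i by simp
    also have "\<dots> = (a * q ^ i * q) mod (t * n)" by (rule mod_mult_left_eq)
    also have "\<dots> = (a * q ^ Suc i) mod (t * n)" by (simp only: mult.assoc power_Suc2)
    finally have "x = (a * q ^ Suc i) mod (t * n)" .
    thus "x \<in> coset a" unfolding cyc_coset_def by blast
  qed
  have inj: "inj_on ?f (coset a)"
  proof (rule inj_onI)
    fix x y assume xy: "x \<in> coset a" "y \<in> coset a" "?f x = ?f y"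
    hence "[x * q = y * q] (mod (t * n))" by (simp add: cong_def)
    hence "[x = y] (mod (t * n))" using coprime_q_tn by (simp add: cong_mult_rcancel_nat)
    moreover have "x < t * n" "y < t * n" using xy(1,2) coset_subset[of a] by auto
    ultimately show "x = y" by (simp add: cong_def)
  qed
  have "?f ` coset a = coset a"
    by (rule card_subset_eq[OF finite_coset img]) (simp add: card_image[OF inj])
  thus ?thesis using inj by (simp add: bij_betw_def)
qed

text \<open>The exponents 1 + ti (i < n) of the roots \<zeta>^(1 + ti) of x^n - \<lambda>.\<close>
definition root_exps :: "nat set" where
  "root_exps = {h. h < t * n \<and> [h = 1] (mod t)}"

lemma coset_subset_root_exps: assumes "[a = 1] (mod t)" shows "coset a \<subseteq> root_exps"
proof
  fix h assume "h \<in> coset a"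
  then obtain i where h: "h = (a * q ^ i) mod (t * n)" unfolding cyc_coset_def by auto
  have "[a * q ^ i = 1 * 1 ^ i] (mod t)"
    by (intro cong_mult cong_pow assms q_cong_1)
  moreover have "h mod t = (a * q ^ i) mod t" unfolding h by (simp add: mod_mod_cancel)
  ultimately have "[h = 1] (mod t)" by (simp add: cong_def)
  thus "h \<in> root_exps" unfolding root_exps_def using h tn_pos by simp
qed

lemma z_power_root_exp_mult_n: assumes "h \<in> root_exps" shows "z ^ (h * n) = z ^ n"
proof -
  have "(h * n) mod (t * n) = (h mod t) * n" by (rule mod_mult_mult2)
  also have "\<dots> = (1 mod t) * n" using assms unfolding root_exps_def cong_def by simp
  also have "\<dots> = (1 * n) mod (t * n)" by (rule mod_mult_mult2[symmetric])
  finally show ?thesis using z_power_mod by (metis mult_1)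
qed

lemma card_root_exps: "card root_exps = n"
proof -
  define r where "r = 1 mod t"
  have r: "r < t" using t_pos unfolding r_def by simp
  have "root_exps = (\<lambda>i. t * i + r) ` {..<n}"
  proof (intro set_eqI iffI)
    fix h assume "h \<in> root_exps"
    hence h: "h < t * n" "h mod t = r" unfolding root_exps_def cong_def r_def by auto
    have "h = t * (h div t) + r" using h(2) by (metis mult_div_mod_eq)
    moreover have "h div t < n" using h(1) t_pos by (simp add: div_less_iff_less_mult mult.commute)
    ultimately show "h \<in> (\<lambda>i. t * i + r) ` {..<n}" by blast
  next
    fix h assume "h \<in> (\<lambda>i. t * i + r) ` {..<n}"
    then obtain i where i: "i < n" "h = t * i + r" by auto
    have "t * i + r < t * n"
    proof -
      have "t * i + r < t * i + t" using r by simp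
      also have "\<dots> = t * (i + 1)" by simp
      also have "\<dots> \<le> t * n" using i(1) by (intro mult_le_mono2) simp
      finally show ?thesis .
    qed
    moreover have "(t * i + r) mod t = 1 mod t" using r unfolding r_def by simp
    ultimately show "h \<in> root_exps" unfolding root_exps_def cong_def using i by simp
  qed
  moreover have "inj_on (\<lambda>i. t * i + r) {..<n}" using t_pos by (auto simp: inj_on_def)
  ultimately show ?thesis by (simp add: card_image)
qed

lemma root_exps_subset: "root_exps \<subseteq> {..<t * n}" unfolding root_exps_def by auto

abbreviation reps :: "nat set" where "reps \<equiv> coset_reps q t n"

lemma finite_reps: "finite reps" unfolding coset_reps_def by auto

lemma zero_in_reps: "0 \<in> reps" unfolding coset_reps_def using n_pos by auto

abbreviation s :: nat where "s \<equiv> s_idx q t n"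

lemma less_card_reps: "j \<le> s \<Longrightarrow> j < card reps"
  using zero_in_reps finite_reps card_gt_0_iff[of reps] unfolding s_idx_def by auto

lemma alpha_in_reps: "j \<le> s \<Longrightarrow> alpha q t n j \<in> reps"
  unfolding alpha_def using less_card_reps[of j] finite_reps
  by (metis distinct_card distinct_sorted_list_of_set nth_mem set_sorted_list_of_set)

lemma alpha_inj: "j \<le> s \<Longrightarrow> j' \<le> s \<Longrightarrow> alpha q t n j = alpha q t n j' \<Longrightarrow> j = j'"
  unfolding alpha_def using less_card_reps[of j] less_card_reps[of j'] finite_reps
  by (metis distinct_card distinct_sorted_list_of_set nth_eq_iff_index_eq set_sorted_list_of_set)

abbreviation rep :: "nat \<Rightarrow> nat" where "rep j \<equiv> 1 + t * alpha q t n j"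

lemma rep_cong_1: "[rep j = 1] (mod t)" by (metis cong_def mod_mult_self2 mult.commute)

lemma coprime_rep_t: "coprime (rep j) t"
proof -
  have "gcd (rep j) t dvd rep j" "gcd (rep j) t dvd t * alpha q t n j" by auto
  hence "gcd (rep j) t dvd 1" by (metis add_diff_cancel_right' dvd_diff_nat)
  thus ?thesis by (simp add: coprime_iff_gcd_eq_1)
qed

lemma cosets_disjoint:
  assumes "j \<le> s" "j' \<le> s" "j \<noteq> j'" shows "coset (rep j) \<inter> coset (rep j') = {}"
proof (rule ccontr)
  assume "coset (rep j) \<inter> coset (rep j') \<noteq> {}"
  then obtain x where x: "x \<in> coset (rep j)" "x \<in> coset (rep j')" by auto
  have neq: "alpha q t n j \<noteq> alpha q t n j'" using alpha_inj assms by blast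
  have minimal: False
    if "alpha q t n k < alpha q t n k'" "k' \<le> s" "rep k mod (t * n) \<in> coset (rep k')" for k k'
    using alpha_in_reps[OF that(2)] that(1,3) unfolding coset_reps_def by auto
  show False
  proof (cases "alpha q t n j < alpha q t n j'")
    case True thus ?thesis using minimal[of j j'] coset_meet[OF x] assms by blast
  next
    case False
    hence "alpha q t n j' < alpha q t n j" using neq by simp
    thus ?thesis using minimal[of j' j] coset_meet[OF x(2,1)] assms by blast
  qed
qed

abbreviation modulus :: "'a poly" where "modulus \<equiv> modpoly n lam"

definition root_eval :: "'a poly \<Rightarrow> nat \<Rightarrow> 'b" where
  "root_eval c h = poly (map_poly e c) (z ^ h)"

lemma map_poly_modulus: "map_poly e modulus = monom 1 n - [:z ^ n:]"
  unfolding modpoly_def z_power_n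
  by (simp add: map_poly_emb_diff[OF emb] map_poly_monom field_emb_0[OF emb]
      map_poly_pCons field_emb_1[OF emb])

lemma root_eval_modulus: "h \<in> root_exps \<Longrightarrow> root_eval modulus h = 0"
  unfolding root_eval_def map_poly_modulus
  by (simp add: poly_monom power_mult[symmetric] z_power_root_exp_mult_n)

lemma degree_modulus: "degree modulus = n"
proof (rule antisym)
  show "degree modulus \<le> n"
    unfolding modpoly_def by (intro degree_diff_le) (auto simp: degree_monom_eq)
  show "n \<le> degree modulus"
    unfolding modpoly_def using n_pos by (intro le_degree) (cases n, auto)
qed

lemma modulus_nonzero: "modulus \<noteq> 0" using degree_modulus n_pos by auto

lemma degree_Rring: "c \<in> Rring n lam \<Longrightarrow> c \<noteq> 0 \<Longrightarrow> degree c < n"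
  using degree_mod_less[OF modulus_nonzero, of c] degree_modulus unfolding Rring_def by simp

lemma root_eval_diff: "root_eval (c - d) h = root_eval c h - root_eval d h"
  and root_eval_mult: "root_eval (c * d) h = root_eval c h * root_eval d h"
  and root_eval_sum: "root_eval (sum f A) h = (\<Sum>x\<in>A. root_eval (f x) h)"
  unfolding root_eval_def
  by (simp_all add: map_poly_emb_diff[OF emb]
      map_poly_emb_mult[OF emb] map_poly_emb_sum[OF emb] poly_sum)

text \<open>A reduced polynomial has degree < n, while the \<zeta>^h (h \<in> root_exps) are n distinct points.\<close>
lemma Rring_eq_0_if_root_eval_eq_0:
  assumes "c \<in> Rring n lam" and "\<forall>h\<in>root_exps. root_eval c h = 0"
  shows "c = 0"
proof (rule ccontr)
  assume "c \<noteq> 0"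
  define p where "p = map_poly e c"
  have "p \<noteq> 0" using \<open>c \<noteq> 0\<close> map_poly_emb_eq_0_iff[OF emb] unfolding p_def by simp
  have "(\<lambda>h. z ^ h) ` root_exps \<subseteq> {x. poly p x = 0}"
    using assms(2) unfolding root_eval_def p_def by auto
  have "card root_exps = card ((\<lambda>h. z ^ h) ` root_exps)"
    by (intro card_image[symmetric] inj_onI) (use root_exps_subset z_power_inj in auto)
  also have "\<dots> \<le> card {x. poly p x = 0}"
    by (intro card_mono poly_roots_finite \<open>p \<noteq> 0\<close>) fact
  also have "\<dots> \<le> degree p" by (rule card_poly_roots_bound[OF \<open>p \<noteq> 0\<close>])
  also have "\<dots> < n"
    using degree_Rring[OF assms(1) \<open>c \<noteq> 0\<close>] degree_map_poly_emb[OF emb] unfolding p_def by simp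
  finally show False using card_root_exps by simp
qed

lemma root_eval_rho:
  assumes "h \<in> root_exps" shows "root_eval (rho n lam c) h = z ^ h * root_eval c h"
proof -
  have "rho n lam c = monom 1 1 * c - (monom 1 1 * c) div modulus * modulus"
    unfolding rho_def by (simp add: minus_div_mult_eq_mod)
  moreover have "root_eval (monom 1 1) h = z ^ h"
    unfolding root_eval_def
    by (simp add: map_poly_monom field_emb_0[OF emb] field_emb_1[OF emb] poly_monom)
  ultimately show ?thesis
    using root_eval_modulus[OF assms] by (simp add: root_eval_diff root_eval_mult)
qed

lemma root_eval_rho_power:
  "h \<in> root_exps \<Longrightarrow> root_eval ((rho n lam ^^ k) c) h = z ^ (h * k) * root_eval c h"
  by (induction k) (auto simp: root_eval_rho power_add)

lemma rho_power_Rring: "c \<in> Rring n lam \<Longrightarrow> (rho n lam ^^ k) c \<in> Rring n lam"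
  by (induction k) (simp_all add: Rring_def rho_def)

lemma rho_power_sum: "(rho n lam ^^ k) (sum f A) = (\<Sum>x\<in>A. (rho n lam ^^ k) (f x))"
proof -
  have "rho n lam (sum g B) = (\<Sum>x\<in>B. rho n lam (g x))" for g :: "'c \<Rightarrow> 'a poly" and B
    unfolding rho_def by (induction B rule: infinite_finite_induct)
      (simp_all add: distrib_left poly_mod_add_left)
  thus ?thesis by (induction k) simp_all
qed

section \<open>Irreducible constacyclic codes\<close>

abbreviation C :: "nat \<Rightarrow> nat set" where "C j \<equiv> coset (rep j)"
abbreviation min_poly_ext :: "nat \<Rightarrow> 'b poly" where
  "min_poly_ext j \<equiv> mj_ext q t n z j"

lemma min_poly_ext_eq: "min_poly_ext j = (\<Prod>h\<in>C j. [:- (z ^ h), 1:])"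
  unfolding mj_ext_def ..

lemma map_poly_frobenius_min_poly_ext: "map_poly (\<lambda>x. x ^ q) (min_poly_ext j) = min_poly_ext j"
proof -
  have frob: "is_field_emb (\<lambda>x::'b. x ^ q)" using is_field_emb_frobenius[OF emb] q_card by simp
  have "map_poly (\<lambda>x. x ^ q) (min_poly_ext j) = (\<Prod>h\<in>C j. map_poly (\<lambda>x. x ^ q) [:- (z ^ h), 1:])"
    unfolding min_poly_ext_eq by (rule map_poly_emb_prod[OF frob])
  also have "\<dots> = (\<Prod>h\<in>C j. [:- (z ^ ((h * q) mod (t * n))), 1:])"
  proof (rule prod.cong[OF refl])
    fix h
    have "map_poly (\<lambda>x. x ^ q) [:- (z ^ h), 1:] = [:(- (z ^ h)) ^ q, 1 ^ q:]"
      using field_emb_0[OF frob] by (simp add: map_poly_pCons)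
    also have "(- (z ^ h)) ^ q = - (z ^ (h * q))"
      using field_emb_uminus[OF frob, of "z ^ h"] by (simp add: power_mult)
    also have "z ^ (h * q) = z ^ ((h * q) mod (t * n))" by (rule z_power_mod)
    finally show "map_poly (\<lambda>x. x ^ q) [:- (z ^ h), 1:] = [:- (z ^ ((h * q) mod (t * n))), 1:]"
      by simp
  qed
  also have "\<dots> = min_poly_ext j"
    unfolding min_poly_ext_eq by (rule prod.reindex_bij_betw[OF bij_betw_times_q_coset])
  finally show ?thesis .
qed

text \<open>
  Multiplication by q permutes the coset, so Frobenius fixes m_j coefficientwise, and its
  fixed points form the image of F_q.
\<close>
lemma min_poly_ext_in_range: "\<exists>p. map_poly e p = min_poly_ext j"
proof -
  have fix_c: "(coeff (min_poly_ext j) i) ^ CARD('a) = coeff (min_poly_ext j) i" for i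
  proof -
    have "coeff (map_poly (\<lambda>x. x ^ q) (min_poly_ext j)) i = (coeff (min_poly_ext j) i) ^ q"
      using q_ge_2 by (simp add: coeff_map_poly)
    thus ?thesis using map_poly_frobenius_min_poly_ext q_card by simp
  qed
  have inv0: "inv e 0 = 0"
    using inv_f_f[OF inj_field_emb[OF emb], of 0] field_emb_0[OF emb] by simp
  have "map_poly e (map_poly (inv e) (min_poly_ext j)) = map_poly (e \<circ> inv e) (min_poly_ext j)"
    by (rule map_poly_map_poly) (use field_emb_0[OF emb] inv0 in auto)
  also have "\<dots> = min_poly_ext j"
  proof (rule poly_eqI)
    fix i
    have "coeff (min_poly_ext j) i \<in> range e" using frobenius_fixed_in_range[OF emb fix_c] by blast
    hence "e (inv e (coeff (min_poly_ext j) i)) = coeff (min_poly_ext j) i"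
      by (simp add: f_inv_into_f)
    thus "coeff (map_poly (e \<circ> inv e) (min_poly_ext j)) i = coeff (min_poly_ext j) i"
      using field_emb_0[OF emb] inv0 by (simp add: coeff_map_poly)
  qed
  finally show ?thesis by blast
qed

abbreviation min_poly :: "nat \<Rightarrow> 'a poly" where "min_poly j \<equiv> mj e q t n z j"

lemma map_poly_min_poly: "map_poly e (min_poly j) = min_poly_ext j"
proof -
  obtain p where p: "map_poly e p = min_poly_ext j" using min_poly_ext_in_range by blast
  have "\<exists>!p. map_poly e p = min_poly_ext j"
    using p inj_map_poly_emb[OF emb] by (auto simp: inj_def)
  thus ?thesis unfolding mj_def by (rule theI')
qed

lemma C_subset_root_exps: "C j \<subseteq> root_exps" by (rule coset_subset_root_exps[OF rep_cong_1])

lemma min_poly_ext_nonzero: "min_poly_ext j \<noteq> 0"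
  unfolding min_poly_ext_eq by (simp add: finite_coset)

lemma degree_min_poly_ext: "degree (min_poly_ext j) = dj q t n j"
  unfolding min_poly_ext_eq dj_def
  by (subst degree_prod_eq_sum_degree) auto

lemma degree_min_poly: "degree (min_poly j) = dj q t n j"
  using degree_min_poly_ext map_poly_min_poly degree_map_poly_emb[OF emb] by metis

lemma min_poly_nonzero: "min_poly j \<noteq> 0"
  using map_poly_min_poly min_poly_ext_nonzero by (metis map_poly_0)

lemma dj_pos: "dj q t n j > 0"
  unfolding dj_def using mod_in_coset[of "rep j"] finite_coset[of "rep j"]
  by (auto simp: card_gt_0_iff)

lemma min_poly_ext_dvd_modulus: "min_poly_ext j dvd map_poly e modulus"
  unfolding min_poly_ext_eq
proof (rule prod_linear_factors_dvd[OF finite_coset])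
  show "inj_on (\<lambda>h. z ^ h) (C j)" by (rule inj_onI) (use coset_subset z_power_inj in blast)
  show "\<forall>x\<in>C j. poly (map_poly e modulus) (z ^ x) = 0"
    using root_eval_modulus C_subset_root_exps unfolding root_eval_def by blast
qed

abbreviation gen_poly :: "nat \<Rightarrow> 'a poly" where "gen_poly j \<equiv> modulus div min_poly j"

text \<open>The remainder of x^n - \<lambda> modulo m_j vanishes because its image over the extension is a
  multiple of m_j of smaller degree.\<close>
lemma modulus_eq_min_poly_mult_gen_poly: "modulus = min_poly j * gen_poly j"
proof -
  obtain G where G: "map_poly e modulus = min_poly_ext j * G"
    using min_poly_ext_dvd_modulus[of j] by (elim dvdE)
  define r where "r = modulus mod min_poly j"
  have div_mod: "gen_poly j * min_poly j + r = modulus" unfolding r_def by (rule div_mult_mod_eq)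
  hence "map_poly e (gen_poly j) * min_poly_ext j + map_poly e r = min_poly_ext j * G"
    using G by (metis map_poly_min_poly map_poly_emb_add[OF emb] map_poly_emb_mult[OF emb])
  hence r_eq: "map_poly e r = min_poly_ext j * (G - map_poly e (gen_poly j))"
    by (simp add: algebra_simps)
  have "r = 0"
  proof (rule ccontr)
    assume "r \<noteq> 0"
    hence "degree r < degree (min_poly j)"
      using degree_mod_less[OF min_poly_nonzero, of modulus] unfolding r_def by auto
    hence less: "degree (map_poly e r) < degree (min_poly_ext j)"
      using degree_min_poly degree_min_poly_ext degree_map_poly_emb[OF emb] by simp
    have "map_poly e r \<noteq> 0" using \<open>r \<noteq> 0\<close> map_poly_emb_eq_0_iff[OF emb] by simp
    hence "G - map_poly e (gen_poly j) \<noteq> 0" using r_eq by auto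
    hence "degree (map_poly e r) = degree (min_poly_ext j) + degree (G - map_poly e (gen_poly j))"
      unfolding r_eq by (rule degree_mult_eq[OF min_poly_ext_nonzero])
    thus False using less by simp
  qed
  thus ?thesis using div_mod by (simp add: mult.commute)
qed

lemma map_poly_modulus_eq: "map_poly e modulus = min_poly_ext j * map_poly e (gen_poly j)"
  using modulus_eq_min_poly_mult_gen_poly[of j] map_poly_min_poly map_poly_emb_mult[OF emb]
  by metis

lemma gen_poly_nonzero: "gen_poly j \<noteq> 0"
  using modulus_eq_min_poly_mult_gen_poly[of j] modulus_nonzero by auto

lemma mult_gen_poly_mod_modulus: "(a * gen_poly j) mod modulus = (a mod min_poly j) * gen_poly j"
proof -
  have "(a * gen_poly j) mod modulus = (a * gen_poly j) mod (min_poly j * gen_poly j)"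
    using modulus_eq_min_poly_mult_gen_poly[of j] by (rule arg_cong)
  thus ?thesis by (simp add: mod_mult_mult2)
qed

abbreviation irr_code :: "nat \<Rightarrow> 'a poly set" where "irr_code j \<equiv> Ij e q t n lam z j"

lemma irr_code_eq_image: "irr_code j = (\<lambda>b. b * gen_poly j) ` {b. degree b < dj q t n j}"
proof (intro equalityI subsetI)
  fix c assume "c \<in> irr_code j"
  then obtain a where "c = (a mod min_poly j) * gen_poly j"
    unfolding Ij_def mult_gen_poly_mod_modulus by blast
  moreover have "degree (a mod min_poly j) < dj q t n j"
    using degree_mod_less[OF min_poly_nonzero[of j], of a] degree_min_poly[of j] dj_pos[of j]
    by (cases "a mod min_poly j = 0") auto
  ultimately show "c \<in> (\<lambda>b. b * gen_poly j) ` {b. degree b < dj q t n j}" by blast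
next
  fix c assume "c \<in> (\<lambda>b. b * gen_poly j) ` {b. degree b < dj q t n j}"
  then obtain b where b: "degree b < dj q t n j" "c = b * gen_poly j" by blast
  have "b mod min_poly j = b" using b(1) degree_min_poly by (intro mod_poly_less) simp
  hence "c = (b * gen_poly j) mod modulus" unfolding b(2) mult_gen_poly_mod_modulus by simp
  thus "c \<in> irr_code j" unfolding Ij_def by blast
qed

lemma card_irr_code: "card (irr_code j) = q ^ dj q t n j"
proof -
  have "inj_on (\<lambda>b. b * gen_poly j) {b. degree b < dj q t n j}"
    using gen_poly_nonzero by (auto simp: inj_on_def)
  hence "card (irr_code j) = card {b :: 'a poly. degree b < dj q t n j}"
    unfolding irr_code_eq_image by (rule card_image)
  thus ?thesis using card_degree_less[OF dj_pos] q_card by simp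
qed

lemma finite_irr_code: "finite (irr_code j)"
  using card_irr_code dj_pos q_ge_2 card_ge_0_finite[of "irr_code j"] by simp

lemma zero_in_irr_code: "0 \<in> irr_code j" unfolding Ij_def by (auto intro!: exI[of _ 0])

lemma irr_code_subset_Rring: "irr_code j \<subseteq> Rring n lam" unfolding Ij_def Rring_def by auto

lemma rho_power_irr_code: "c \<in> irr_code j \<Longrightarrow> (rho n lam ^^ k) c \<in> irr_code j"
proof (induction k)
  case (Suc k)
  then obtain a where "(rho n lam ^^ k) c = (a * gen_poly j) mod modulus" unfolding Ij_def by auto
  hence "(rho n lam ^^ Suc k) c = ((monom 1 1 * a) * gen_poly j) mod modulus"
    unfolding rho_def by (simp add: mod_mult_right_eq mult.assoc)
  thus ?case unfolding Ij_def by blast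
qed simp

text \<open>Off the coset, m_j(\<zeta>^h) \<noteq> 0, so \<zeta>^h must be a root of the generator (x^n - \<lambda>) / m_j.\<close>
lemma root_eval_irr_code_outside:
  assumes "c \<in> irr_code j" "h \<in> root_exps" "h \<notin> C j"
  shows "root_eval c h = 0"
proof -
  obtain b where b: "c = b * gen_poly j" using assms(1) irr_code_eq_image by blast
  have "poly (min_poly_ext j) (z ^ h) = (\<Prod>h'\<in>C j. z ^ h - z ^ h')"
    unfolding min_poly_ext_eq by (simp add: poly_prod)
  moreover have "z ^ h \<noteq> z ^ h'" if "h' \<in> C j" for h'
    using z_power_inj[of h h'] assms(2,3) root_exps_subset coset_subset that by auto
  ultimately have "poly (min_poly_ext j) (z ^ h) \<noteq> 0" using finite_coset by simp
  moreover have "poly (min_poly_ext j) (z ^ h) * poly (map_poly e (gen_poly j)) (z ^ h) = 0"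
    using root_eval_modulus[OF assms(2)] map_poly_modulus_eq[of j] unfolding root_eval_def by simp
  ultimately show ?thesis unfolding b root_eval_def by (simp add: map_poly_emb_mult[OF emb])
qed

section \<open>Codewords with prescribed nonzero components\<close>

lemma Rring_diff: "c \<in> Rring n lam \<Longrightarrow> d \<in> Rring n lam \<Longrightarrow> c - d \<in> Rring n lam"
  unfolding Rring_def by (simp add: poly_mod_diff_left)

lemma rho_power_fixed_iff:
  assumes "c \<in> Rring n lam"
  shows "(rho n lam ^^ k) c = c \<longleftrightarrow> (\<forall>h\<in>root_exps. root_eval c h \<noteq> 0 \<longrightarrow> t * n dvd h * k)"
proof
  assume fixed: "(rho n lam ^^ k) c = c"
  show "\<forall>h\<in>root_exps. root_eval c h \<noteq> 0 \<longrightarrow> t * n dvd h * k"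
  proof (intro ballI impI)
    fix h assume "h \<in> root_exps" "root_eval c h \<noteq> 0"
    hence "z ^ (h * k) = 1" using root_eval_rho_power[of h k c] fixed by simp
    thus "t * n dvd h * k" by (simp add: z_power_eq_1_iff)
  qed
next
  assume H: "\<forall>h\<in>root_exps. root_eval c h \<noteq> 0 \<longrightarrow> t * n dvd h * k"
  have "\<forall>h\<in>root_exps. root_eval ((rho n lam ^^ k) c - c) h = 0"
    using H by (auto simp: root_eval_diff root_eval_rho_power z_power_eq_1_iff)
  hence "(rho n lam ^^ k) c - c = 0"
    by (intro Rring_eq_0_if_root_eval_eq_0 Rring_diff rho_power_Rring assms)
  thus "(rho n lam ^^ k) c = c" by simp
qed

lemma rho_power_nonzero:
  assumes "c \<in> Rring n lam" "c \<noteq> 0" shows "(rho n lam ^^ k) c \<noteq> 0"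
proof
  assume "(rho n lam ^^ k) c = 0"
  hence "\<forall>h\<in>root_exps. root_eval c h = 0"
    using root_eval_rho_power[of _ k c] z_nonzero by (simp add: root_eval_def)
  thus False using Rring_eq_0_if_root_eval_eq_0[OF assms(1)] assms(2) by simp
qed

lemma irr_code_eqI:
  assumes "c \<in> irr_code j" "d \<in> irr_code j" "\<forall>h\<in>C j. root_eval c h = root_eval d h"
  shows "c = d"
proof -
  have "c - d \<in> Rring n lam"
    using assms(1,2) irr_code_subset_Rring by (blast intro: Rring_diff)
  moreover have "\<forall>h\<in>root_exps. root_eval (c - d) h = 0"
    using assms root_eval_irr_code_outside by (auto simp: root_eval_diff)
  ultimately have "c - d = 0" by (rule Rring_eq_0_if_root_eval_eq_0)
  thus ?thesis by simp
qed

lemma irr_code_nonzero_root_eval: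
  "c \<in> irr_code j \<Longrightarrow> c \<noteq> 0 \<Longrightarrow> \<exists>h\<in>C j. root_eval c h \<noteq> 0"
  using irr_code_eqI[OF _ zero_in_irr_code] by (auto simp: root_eval_def)

text \<open>Since the cosets are disjoint, at a root in C k only the k-th component contributes.\<close>
lemma root_eval_sum_irr_codes:
  assumes "\<Gamma> \<subseteq> {..s}" "\<forall>j\<in>\<Gamma>. f j \<in> irr_code j" "k \<le> s" "h \<in> C k"
  shows "root_eval (sum f \<Gamma>) h = (if k \<in> \<Gamma> then root_eval (f k) h else 0)"
proof -
  have "root_eval (f j) h = (if j = k then root_eval (f k) h else 0)" if "j \<in> \<Gamma>" for j
  proof (cases "j = k")
    case False
    hence "h \<notin> C j" using cosets_disjoint[of j k] assms(1,3,4) that by auto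
    thus ?thesis
      using root_eval_irr_code_outside[of "f j" j h] assms(2,4) that False C_subset_root_exps
      by auto
  qed simp
  hence "root_eval (sum f \<Gamma>) h = (\<Sum>j\<in>\<Gamma>. if j = k then root_eval (f k) h else 0)"
    by (simp add: root_eval_sum)
  also have "\<dots> = (if k \<in> \<Gamma> then root_eval (f k) h else 0)"
    using finite_subset[OF assms(1)] by (simp add: sum.delta')
  finally show ?thesis .
qed

lemma root_eval_sum_irr_codes_nonzero:
  assumes "\<forall>j\<in>\<Gamma>. f j \<in> irr_code j" "h \<in> root_exps" "root_eval (sum f \<Gamma>) h \<noteq> 0"
  shows "\<exists>j\<in>\<Gamma>. h \<in> C j"
proof (rule ccontr)
  assume "\<not> (\<exists>j\<in>\<Gamma>. h \<in> C j)"
  hence "\<forall>j\<in>\<Gamma>. root_eval (f j) h = 0"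
    using assms(1,2) root_eval_irr_code_outside by blast
  thus False using assms(3) by (simp add: root_eval_sum)
qed

definition support_class :: "nat set \<Rightarrow> 'a poly set" where
  "support_class \<Gamma> = (\<lambda>f. sum f \<Gamma>) ` (\<Pi>\<^sub>E j\<in>\<Gamma>. irr_code j - {0})"

lemma support_class_eq_indices:
  assumes "\<Gamma> \<subseteq> {..s}" "c \<in> support_class \<Gamma>"
  shows "\<Gamma> = {k. k \<le> s \<and> (\<exists>h\<in>C k. root_eval c h \<noteq> 0)}"
proof -
  obtain f where f: "f \<in> (\<Pi>\<^sub>E j\<in>\<Gamma>. irr_code j - {0})" "c = sum f \<Gamma>"
    using assms(2) unfolding support_class_def by blast
  hence f_in: "\<forall>j\<in>\<Gamma>. f j \<in> irr_code j" by auto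
  show ?thesis
  proof (intro equalityI subsetI CollectI conjI)
    fix k assume "k \<in> \<Gamma>"
    then obtain h where "h \<in> C k" "root_eval (f k) h \<noteq> 0"
      using f(1) irr_code_nonzero_root_eval[of "f k" k] by (auto simp: PiE_iff)
    moreover have "k \<le> s" using \<open>k \<in> \<Gamma>\<close> assms(1) by auto
    ultimately show "\<exists>h\<in>C k. root_eval c h \<noteq> 0"
      using root_eval_sum_irr_codes[OF assms(1) f_in] \<open>k \<in> \<Gamma>\<close> f(2) by auto
  next
    fix k assume "k \<in> {k. k \<le> s \<and> (\<exists>h\<in>C k. root_eval c h \<noteq> 0)}"
    thus "k \<in> \<Gamma>"
      using root_eval_sum_irr_codes[OF assms(1) f_in] f(2) by (auto split: if_splits)
  qed (use assms(1) in auto)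
qed

lemma support_classes_disjoint:
  assumes "\<Gamma> \<subseteq> {..s}" "\<Gamma>' \<subseteq> {..s}" "\<Gamma> \<noteq> \<Gamma>'"
  shows "support_class \<Gamma> \<inter> support_class \<Gamma>' = {}"
proof -
  have False if "c \<in> support_class \<Gamma>" "c \<in> support_class \<Gamma>'" for c
    using support_class_eq_indices[OF assms(1) that(1)]
      support_class_eq_indices[OF assms(2) that(2)] assms(3) by simp
  thus ?thesis by blast
qed

lemma zero_notin_support_class:
  assumes "\<Gamma> \<subseteq> {..s}" "\<Gamma> \<noteq> {}" shows "0 \<notin> support_class \<Gamma>"
proof
  assume "0 \<in> support_class \<Gamma>"
  from support_class_eq_indices[OF assms(1) this] show False
    using assms(2) by (simp add: root_eval_def)
qed

lemma code_minus_zero_eq_Union_support_classes: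
  assumes "B \<subseteq> {0..s}"
  shows "code e q t n lam z B - {0} = \<Union> (support_class ` {\<Gamma>. \<Gamma> \<subseteq> B \<and> \<Gamma> \<noteq> {}})"
proof (intro equalityI subsetI)
  fix c assume "c \<in> code e q t n lam z B - {0}"
  then obtain f where f: "\<forall>j\<in>B. f j \<in> irr_code j" "c = sum f B" "c \<noteq> 0"
    unfolding code_def by blast
  define \<Gamma> where "\<Gamma> = {j\<in>B. f j \<noteq> 0}"
  have "\<Gamma> \<subseteq> B" unfolding \<Gamma>_def by blast
  have "c = sum f \<Gamma>"
    unfolding f(2) \<Gamma>_def using finite_subset[OF assms] by (intro sum.mono_neutral_right) auto
  also have "\<dots> = sum (restrict f \<Gamma>) \<Gamma>" by simp
  moreover have "restrict f \<Gamma> \<in> (\<Pi>\<^sub>E j\<in>\<Gamma>. irr_code j - {0})"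
    using f(1) by (auto simp: \<Gamma>_def)
  ultimately have "c \<in> support_class \<Gamma>" unfolding support_class_def by blast
  moreover have "\<Gamma> \<noteq> {}" using \<open>c = sum f \<Gamma>\<close> f(3) by auto
  ultimately show "c \<in> \<Union> (support_class ` {\<Gamma>. \<Gamma> \<subseteq> B \<and> \<Gamma> \<noteq> {}})"
    using \<open>\<Gamma> \<subseteq> B\<close> by blast
next
  fix c assume "c \<in> \<Union> (support_class ` {\<Gamma>. \<Gamma> \<subseteq> B \<and> \<Gamma> \<noteq> {}})"
  then obtain \<Gamma> where \<Gamma>: "\<Gamma> \<subseteq> B" "\<Gamma> \<noteq> {}" "c \<in> support_class \<Gamma>" by blast
  then obtain f where f: "f \<in> (\<Pi>\<^sub>E j\<in>\<Gamma>. irr_code j - {0})" "c = sum f \<Gamma>"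
    unfolding support_class_def by blast
  define g where "g j = (if j \<in> \<Gamma> then f j else 0)" for j
  have "\<forall>j\<in>B. g j \<in> irr_code j" using f(1) zero_in_irr_code unfolding g_def by auto
  moreover have "sum g B = sum f \<Gamma>"
    unfolding g_def using \<Gamma>(1) finite_subset[OF assms]
    by (intro sum.mono_neutral_cong_right) auto
  ultimately have "c \<in> code e q t n lam z B"
    unfolding code_def f(2) by (auto intro!: exI[of _ g])
  moreover have "\<Gamma> \<subseteq> {..s}" using \<Gamma>(1) assms by auto
  hence "c \<noteq> 0" using zero_notin_support_class \<Gamma>(2,3) by blast
  ultimately show "c \<in> code e q t n lam z B - {0}" by simp
qed

lemma finite_support_class: "finite \<Gamma> \<Longrightarrow> finite (support_class \<Gamma>)"
  unfolding support_class_def using finite_irr_code by (intro finite_imageI finite_PiE) auto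

lemma card_support_class:
  assumes "\<Gamma> \<subseteq> {..s}"
  shows "card (support_class \<Gamma>) = (\<Prod>j\<in>\<Gamma>. q ^ dj q t n j - 1)"
proof -
  have "inj_on (\<lambda>f. sum f \<Gamma>) (\<Pi>\<^sub>E j\<in>\<Gamma>. irr_code j - {0})"
  proof (rule inj_onI)
    fix f g assume f: "f \<in> (\<Pi>\<^sub>E j\<in>\<Gamma>. irr_code j - {0})" and g: "g \<in> (\<Pi>\<^sub>E j\<in>\<Gamma>. irr_code j - {0})"
      and eq: "sum f \<Gamma> = sum g \<Gamma>"
    have f_in: "\<forall>j\<in>\<Gamma>. f j \<in> irr_code j" and g_in: "\<forall>j\<in>\<Gamma>. g j \<in> irr_code j"
      using f g by auto
    have "f j = g j" if "j \<in> \<Gamma>" for j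
    proof (rule irr_code_eqI)
      show "f j \<in> irr_code j" "g j \<in> irr_code j" using f_in g_in that by auto
      have "j \<le> s" using that assms by auto
      show "\<forall>h\<in>C j. root_eval (f j) h = root_eval (g j) h"
        using root_eval_sum_irr_codes[OF assms f_in \<open>j \<le> s\<close>]
          root_eval_sum_irr_codes[OF assms g_in \<open>j \<le> s\<close>] eq that by auto
    qed
    thus "f = g" using f g by (auto intro: PiE_ext)
  qed
  hence "card (support_class \<Gamma>) = card (\<Pi>\<^sub>E j\<in>\<Gamma>. irr_code j - {0})"
    unfolding support_class_def by (rule card_image)
  also have "\<dots> = (\<Prod>j\<in>\<Gamma>. q ^ dj q t n j - 1)"
    using finite_subset[OF assms]
    by (simp add: card_PiE card_Diff_singleton finite_irr_code zero_in_irr_code card_irr_code)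
  finally show ?thesis .
qed

lemma support_class_subset_Rring: "support_class \<Gamma> \<subseteq> Rring n lam"
proof
  fix c assume "c \<in> support_class \<Gamma>"
  then obtain f where "\<forall>j\<in>\<Gamma>. f j \<in> irr_code j" "c = sum f \<Gamma>"
    unfolding support_class_def by fastforce
  thus "c \<in> Rring n lam"
    using irr_code_subset_Rring unfolding Rring_def
    by (induction \<Gamma> arbitrary: c rule: infinite_finite_induct) (auto simp: poly_mod_add_left)
qed

lemma rho_power_support_class:
  assumes "c \<in> support_class \<Gamma>" shows "(rho n lam ^^ k) c \<in> support_class \<Gamma>"
proof -
  obtain f where f: "f \<in> (\<Pi>\<^sub>E j\<in>\<Gamma>. irr_code j - {0})" "c = sum f \<Gamma>"
    using assms unfolding support_class_def by blast
  have "(rho n lam ^^ k) (f j) \<in> irr_code j - {0}" if "j \<in> \<Gamma>" for j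
  proof -
    have "f j \<in> irr_code j" "f j \<noteq> 0" using f(1) that by auto
    thus ?thesis
      using rho_power_irr_code rho_power_nonzero irr_code_subset_Rring by blast
  qed
  hence "restrict (\<lambda>j. (rho n lam ^^ k) (f j)) \<Gamma> \<in> (\<Pi>\<^sub>E j\<in>\<Gamma>. irr_code j - {0})" by simp
  moreover have "(rho n lam ^^ k) c = sum (restrict (\<lambda>j. (rho n lam ^^ k) (f j)) \<Gamma>) \<Gamma>"
    unfolding f(2) rho_power_sum by simp
  ultimately show ?thesis unfolding support_class_def by blast
qed

lemma support_class_fixed_iff:
  assumes "\<Gamma> \<subseteq> {..s}" "c \<in> support_class \<Gamma>"
  shows "(rho n lam ^^ k) c = c \<longleftrightarrow> (\<forall>j\<in>\<Gamma>. t * n dvd rep j * k)"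
proof -
  obtain f where f: "f \<in> (\<Pi>\<^sub>E j\<in>\<Gamma>. irr_code j - {0})" "c = sum f \<Gamma>"
    using assms(2) unfolding support_class_def by blast
  hence f_in: "\<forall>j\<in>\<Gamma>. f j \<in> irr_code j" by auto
  have "c \<in> Rring n lam" using support_class_subset_Rring assms(2) by blast
  have "(\<forall>h\<in>root_exps. root_eval c h \<noteq> 0 \<longrightarrow> t * n dvd h * k) \<longleftrightarrow> (\<forall>j\<in>\<Gamma>. t * n dvd rep j * k)"
  proof
    assume H: "\<forall>h\<in>root_exps. root_eval c h \<noteq> 0 \<longrightarrow> t * n dvd h * k"
    show "\<forall>j\<in>\<Gamma>. t * n dvd rep j * k"
    proof
      fix j assume "j \<in> \<Gamma>"
      then obtain h where h: "h \<in> C j" "root_eval (f j) h \<noteq> 0"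
        using f(1) irr_code_nonzero_root_eval[of "f j" j] by (auto simp: PiE_iff)
      hence "root_eval c h \<noteq> 0"
        using root_eval_sum_irr_codes[OF assms(1) f_in, of j h] \<open>j \<in> \<Gamma>\<close> assms(1) f(2) by auto
      hence "t * n dvd h * k" using H h(1) C_subset_root_exps by blast
      thus "t * n dvd rep j * k" using coset_dvd_mult_iff[OF h(1)] by simp
    qed
  next
    assume H: "\<forall>j\<in>\<Gamma>. t * n dvd rep j * k"
    show "\<forall>h\<in>root_exps. root_eval c h \<noteq> 0 \<longrightarrow> t * n dvd h * k"
    proof (intro ballI impI)
      fix h assume "h \<in> root_exps" "root_eval c h \<noteq> 0"
      then obtain j where "j \<in> \<Gamma>" "h \<in> C j"
        using root_eval_sum_irr_codes_nonzero[OF f_in] f(2) by blast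
      thus "t * n dvd h * k" using H coset_dvd_mult_iff by blast
    qed
  qed
  thus ?thesis using rho_power_fixed_iff[OF \<open>c \<in> Rring n lam\<close>] by simp
qed

definition support_gcd :: "nat set \<Rightarrow> nat" where
  "support_gcd \<Gamma> = Gcd (rep ` \<Gamma> \<union> {n})"

lemma support_gcd_dvd: "support_gcd \<Gamma> dvd t * n"
  unfolding support_gcd_def by (simp add: Gcd_dvd)

lemma support_gcd_pos: "0 < support_gcd \<Gamma>"
  unfolding support_gcd_def using n_pos by (auto simp: Gcd_0_iff)

lemma support_class_period:
  assumes "\<Gamma> \<subseteq> {..s}" "\<Gamma> \<noteq> {}" "c \<in> support_class \<Gamma>"
  shows "(rho n lam ^^ k) c = c \<longleftrightarrow> t * n div support_gcd \<Gamma> dvd k"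
proof -
  have "(rho n lam ^^ k) c = c \<longleftrightarrow> t * n dvd support_gcd \<Gamma> * k"
    unfolding support_class_fixed_iff[OF assms(1,3)] support_gcd_def
    using dvd_mult_all_iff_dvd_Gcd_mult[of "rep ` \<Gamma>" t n k] assms(2) coprime_rep_t by simp
  also have "\<dots> \<longleftrightarrow> t * n div support_gcd \<Gamma> dvd k"
  proof -
    obtain L where L: "t * n = support_gcd \<Gamma> * L" using support_gcd_dvd[of \<Gamma>] by (elim dvdE)
    thus ?thesis using support_gcd_pos[of \<Gamma>] by simp
  qed
  finally show ?thesis .
qed

lemma card_funpow_orbits_support_class:
  assumes "\<Gamma> \<subseteq> {..s}" "\<Gamma> \<noteq> {}"
  shows "t * n * card (funpow_orbit (rho n lam) ` support_class \<Gamma>)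
           = (\<Prod>j\<in>\<Gamma>. q ^ dj q t n j - 1) * support_gcd \<Gamma>"
proof -
  define L where "L = t * n div support_gcd \<Gamma>"
  have L: "L * support_gcd \<Gamma> = t * n" unfolding L_def using support_gcd_dvd by simp
  hence "0 < L" using tn_pos by (cases L) auto
  have "card (support_class \<Gamma>) = L * card (funpow_orbit (rho n lam) ` support_class \<Gamma>)"
    using finite_support_class finite_subset[OF assms(1)] \<open>0 < L\<close>
      rho_power_support_class support_class_period[OF assms] unfolding L_def
    by (intro card_eq_period_mult_card_funpow_orbits) auto
  hence "(\<Prod>j\<in>\<Gamma>. q ^ dj q t n j - 1) * support_gcd \<Gamma>
      = L * support_gcd \<Gamma> * card (funpow_orbit (rho n lam) ` support_class \<Gamma>)"
    using card_support_class[OF assms(1)] by (simp add: ac_simps)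
  thus ?thesis using L by simp
qed

section \<open>Hamming weights\<close>

lemma rho_eq_shift:
  assumes "c \<in> Rring n lam"
  shows "rho n lam c = monom 1 1 * c - smult (coeff c (n - 1)) modulus"
proof -
  let ?r = "monom 1 1 * c - smult (coeff c (n - 1)) modulus"
  have "coeff c i = 0" if "n \<le> i" for i
    using degree_Rring[OF assms] that by (cases "c = 0") (auto intro: coeff_eq_0)
  hence "coeff ?r i = 0" if "n \<le> i" for i
    using that n_pos by (cases i) (auto simp: coeff_monom_mult modpoly_def coeff_monom)
  hence "degree ?r \<le> n - 1" using n_pos by (intro degree_le) auto
  hence "?r mod modulus = ?r" using degree_modulus n_pos by (intro mod_poly_less) simp
  moreover have "smult (coeff c (n - 1)) modulus mod modulus = 0"
    by (simp add: mod_eq_0_iff_dvd dvd_smult)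
  ultimately show ?thesis unfolding rho_def by (simp add: poly_mod_diff_left)
qed

lemma coeff_rho:
  assumes "c \<in> Rring n lam"
  shows "coeff (rho n lam c) i =
    (if i = 0 then lam * coeff c (n - 1) else if i < n then coeff c (i - 1) else 0)"
proof -
  have "coeff c i = 0" if "n \<le> i" for i
    using degree_Rring[OF assms] that by (cases "c = 0") (auto intro: coeff_eq_0)
  thus ?thesis
    unfolding rho_eq_shift[OF assms] using n_pos
    by (cases i) (auto simp: coeff_monom_mult modpoly_def coeff_monom)
qed

text \<open>\<rho> permutes the coordinates cyclically, rescaling one of them by \<lambda> \<noteq> 0.\<close>
lemma hweight_rho:
  assumes "c \<in> Rring n lam" shows "hweight (rho n lam c) = hweight c"
proof -
  let ?supp = "\<lambda>c. {i. coeff c i \<noteq> 0}"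
  let ?shift = "\<lambda>i. if Suc i = n then 0 else Suc i"
  have supp_c: "?supp c \<subseteq> {..<n}"
  proof
    fix i assume "i \<in> ?supp c"
    hence "c \<noteq> 0" "i \<le> degree c" by (auto intro: le_degree)
    thus "i \<in> {..<n}" using degree_Rring[OF assms] by simp
  qed
  have supp_rho: "?supp (rho n lam c) = ?shift ` ?supp c"
  proof (intro equalityI subsetI)
    fix i assume "i \<in> ?supp (rho n lam c)"
    hence i: "coeff (rho n lam c) i \<noteq> 0" by simp
    show "i \<in> ?shift ` ?supp c"
    proof (cases i)
      case 0
      hence "n - 1 \<in> ?supp c" using i by (simp add: coeff_rho[OF assms])
      moreover have "i = ?shift (n - 1)" using 0 n_pos by simp
      ultimately show ?thesis by (rule rev_image_eqI)
    next
      case (Suc i')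
      hence "i < n" "i' \<in> ?supp c" using i by (simp_all add: coeff_rho[OF assms] split: if_splits)
      have "i = ?shift i'" using Suc \<open>i < n\<close> by simp
      with \<open>i' \<in> ?supp c\<close> show ?thesis by (rule rev_image_eqI)
    qed
  next
    fix i assume "i \<in> ?shift ` ?supp c"
    then obtain i' where i': "i' \<in> ?supp c" "i = ?shift i'" by blast
    hence "i' < n" using supp_c by auto
    thus "i \<in> ?supp (rho n lam c)"
      using i' lam_nonzero by (cases "Suc i' = n") (auto simp: coeff_rho[OF assms])
  qed
  have "inj_on ?shift (?supp c)"
  proof (rule inj_onI)
    fix x y assume "x \<in> ?supp c" "y \<in> ?supp c" and eq: "?shift x = ?shift y"
    hence "x < n" "y < n" using supp_c by auto
    thus "x = y" using eq by (simp split: if_splits)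
  qed
  thus ?thesis unfolding hweight_def supp_rho by (rule card_image)
qed

lemma hweight_rho_power: "c \<in> Rring n lam \<Longrightarrow> hweight ((rho n lam ^^ k) c) = hweight c"
  by (induction k) (simp_all add: hweight_rho rho_power_Rring)

section \<open>Counting orbits\<close>

lemma funpow_orbit_subset_support_class:
  "c \<in> support_class \<Gamma> \<Longrightarrow> funpow_orbit (rho n lam) c \<subseteq> support_class \<Gamma>"
  unfolding funpow_orbit_def using rho_power_support_class by blast

lemma funpow_orbits_support_classes_disjoint:
  assumes "\<Gamma> \<subseteq> {..s}" "\<Gamma>' \<subseteq> {..s}" "\<Gamma> \<noteq> \<Gamma>'"
  shows "funpow_orbit (rho n lam) ` support_class \<Gamma> \<inter> funpow_orbit (rho n lam) ` support_class \<Gamma>'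
    = {}"
proof -
  have False if "c \<in> support_class \<Gamma>" "c' \<in> support_class \<Gamma>'"
    "funpow_orbit (rho n lam) c = funpow_orbit (rho n lam) c'" for c c'
  proof -
    have "c \<in> support_class \<Gamma>'"
      using self_in_funpow_orbit[of c] funpow_orbit_subset_support_class[OF that(2)] that(3)
      by blast
    thus False using support_classes_disjoint[OF assms] that(1) by blast
  qed
  thus ?thesis by blast
qed

lemma num_orbits_code:
  assumes "B \<subseteq> {0..s}"
  shows "real (num_orbits n lam (code e q t n lam z B - {0})) =
    (\<Sum>\<Gamma>\<in>{\<Gamma>. \<Gamma> \<subseteq> B \<and> \<Gamma> \<noteq> {}}.
       real ((\<Prod>j\<in>\<Gamma>. q ^ dj q t n j - 1) * support_gcd \<Gamma>) / real (t * n))"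
proof -
  let ?Gs = "{\<Gamma>. \<Gamma> \<subseteq> B \<and> \<Gamma> \<noteq> {}}"
  let ?orbits = "\<lambda>\<Gamma>. funpow_orbit (rho n lam) ` support_class \<Gamma>"
  have finite_B: "finite B" using assms finite_subset by blast
  have sub: "\<Gamma> \<subseteq> {..s}" if "\<Gamma> \<in> ?Gs" for \<Gamma> using that assms by auto
  have "num_orbits n lam (code e q t n lam z B - {0}) = card (\<Union>\<Gamma>\<in>?Gs. ?orbits \<Gamma>)"
    unfolding num_orbits_def rho_orbit_eq_funpow_orbit
      code_minus_zero_eq_Union_support_classes[OF assms] by (simp add: image_UN)
  also have "\<dots> = (\<Sum>\<Gamma>\<in>?Gs. card (?orbits \<Gamma>))"
  proof (rule card_UN_disjoint)
    show "finite ?Gs" using finite_B by (auto intro: finite_subset[of _ "Pow B"])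
    show "\<forall>\<Gamma>\<in>?Gs. finite (?orbits \<Gamma>)"
      using finite_support_class finite_B finite_subset by blast
    show "\<forall>\<Gamma>\<in>?Gs. \<forall>\<Gamma>'\<in>?Gs. \<Gamma> \<noteq> \<Gamma>' \<longrightarrow> ?orbits \<Gamma> \<inter> ?orbits \<Gamma>' = {}"
      using funpow_orbits_support_classes_disjoint sub by blast
  qed
  finally have "real (num_orbits n lam (code e q t n lam z B - {0}))
      = (\<Sum>\<Gamma>\<in>?Gs. real (card (?orbits \<Gamma>)))" by simp
  also have "\<dots> = (\<Sum>\<Gamma>\<in>?Gs. real ((\<Prod>j\<in>\<Gamma>. q ^ dj q t n j - 1) * support_gcd \<Gamma>) / real (t * n))"
  proof (rule sum.cong[OF refl])
    fix \<Gamma> assume "\<Gamma> \<in> ?Gs"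
    hence nat_eq: "t * n * card (?orbits \<Gamma>) = (\<Prod>j\<in>\<Gamma>. q ^ dj q t n j - 1) * support_gcd \<Gamma>"
      using card_funpow_orbits_support_class[OF sub] by blast
    have "real (card (?orbits \<Gamma>)) * real (t * n)
        = real ((\<Prod>j\<in>\<Gamma>. q ^ dj q t n j - 1) * support_gcd \<Gamma>)"
      unfolding of_nat_mult[symmetric] nat_eq[symmetric] by (simp only: ac_simps)
    thus "real (card (?orbits \<Gamma>))
        = real ((\<Prod>j\<in>\<Gamma>. q ^ dj q t n j - 1) * support_gcd \<Gamma>) / real (t * n)"
      using tn_pos by (simp add: nonzero_eq_divide_eq del: of_nat_mult)
  qed
  finally show ?thesis .
qed

lemma card_hweights_code:
  assumes "B \<subseteq> {0..s}"
  defines "X \<equiv> code e q t n lam z B - {0}"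
  shows "card (hweight ` X) \<le> num_orbits n lam X \<and>
    (card (hweight ` X) = num_orbits n lam X \<longleftrightarrow>
      (\<forall>c1\<in>X. \<forall>c2\<in>X. hweight c1 = hweight c2 \<longrightarrow> (\<exists>k. (rho n lam ^^ k) c1 = c2)))"
proof -
  let ?Gs = "{\<Gamma>. \<Gamma> \<subseteq> B \<and> \<Gamma> \<noteq> {}}"
  have X: "X = \<Union> (support_class ` ?Gs)"
    unfolding X_def by (rule code_minus_zero_eq_Union_support_classes[OF assms(1)])
  have in_class: "\<exists>\<Gamma>. \<Gamma> \<subseteq> {..s} \<and> c \<in> support_class \<Gamma> \<and> support_class \<Gamma> \<subseteq> X"
    if c: "c \<in> X" for c
  proof -
    obtain \<Gamma> where "\<Gamma> \<in> ?Gs" "c \<in> support_class \<Gamma>" using c unfolding X by blast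
    moreover from this(1) have "\<Gamma> \<subseteq> {..s}" using assms(1) by auto
    moreover from \<open>\<Gamma> \<in> ?Gs\<close> have "support_class \<Gamma> \<subseteq> X" unfolding X by blast
    ultimately show ?thesis by blast
  qed
  have periodic: "(rho n lam ^^ (t * n)) c = c" if c: "c \<in> X" for c
  proof -
    obtain \<Gamma> where "\<Gamma> \<subseteq> {..s}" "c \<in> support_class \<Gamma>" using in_class[OF c] by blast
    moreover have "\<forall>j\<in>\<Gamma>. t * n dvd rep j * (t * n)" by simp
    ultimately show ?thesis by (simp add: support_class_fixed_iff)
  qed
  have finite_B: "finite B" using assms(1) finite_subset by blast
  hence "finite ?Gs" by (auto intro: finite_subset[of _ "Pow B"])
  moreover have "finite (support_class \<Gamma>)" if "\<Gamma> \<subseteq> B" for \<Gamma>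
    using finite_support_class finite_subset[OF that finite_B] by blast
  ultimately have "finite X" unfolding X by (subst finite_UN) auto
  moreover have "(rho n lam ^^ k) c \<in> X" if "c \<in> X" for c k
    using in_class[OF that] rho_power_support_class by blast
  moreover have "\<exists>L>0. (rho n lam ^^ L) c = c" if "c \<in> X" for c
    using periodic[OF that] tn_pos by blast
  moreover have "hweight ((rho n lam ^^ k) c) = hweight c" if "c \<in> X" for c k
    using in_class[OF that] hweight_rho_power support_class_subset_Rring by blast
  ultimately show ?thesis
    unfolding num_orbits_def rho_orbit_eq_funpow_orbit by (rule card_invariant_image_funpow_orbits)
qed

end

theorem theorem1:
  fixes lam :: "'a::{finite,field}"
    and e :: "'a \<Rightarrow> 'b::{finite,field}"
    and z :: 'b
    and q n t :: nat
    and B :: "nat set"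
  assumes hq: "q = CARD('a)"
    and hn: "0 < n" and hcop: "coprime n q"
    and hlam: "lam \<noteq> 0" and ht: "t = mult_ord lam"
    and he: "is_field_emb e"
    and hz: "prim_root (t * n) z" and hzn: "z ^ n = e lam"
    and hB: "B \<subseteq> {0..s_idx q t n}"
  shows "real (num_orbits n lam (code e q t n lam z B - {0})) =
           (\<Sum>\<Gamma>\<in>{\<Gamma>. \<Gamma> \<subseteq> B \<and> \<Gamma> \<noteq> {}}.
              real ((\<Prod>j\<in>\<Gamma>. q ^ dj q t n j - 1) *
                    Gcd ((\<lambda>j. 1 + t * alpha q t n j) ` \<Gamma> \<union> {n}))
              / real (t * n))
         \<and> card (hweight ` (code e q t n lam z B - {0}))
             \<le> num_orbits n lam (code e q t n lam z B - {0})
         \<and> (card (hweight ` (code e q t n lam z B - {0}))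
               = num_orbits n lam (code e q t n lam z B - {0})
             \<longleftrightarrow> (\<forall>c1\<in>code e q t n lam z B - {0}. \<forall>c2\<in>code e q t n lam z B - {0}.
                   hweight c1 = hweight c2 \<longrightarrow> (\<exists>k. (rho n lam ^^ k) c1 = c2)))"
proof -
  interpret constacyclic lam e z q n t
    by unfold_locales (rule hq hn hcop hlam ht he hz hzn)+
  show ?thesis
    using num_orbits_code[OF hB] card_hweights_code[OF hB] unfolding support_gcd_def by simp
qed

end
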